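(* Let $\mathcal{A}$ be a $k$-linear abelian category with enough injectives, over a field $k$. Let $C$ be an object of $\mathcal{A}$ whose endomorphism ring $\operatorname{Hom}(C,C)$ is local. Let $A$ be another object of $\mathcal{A}$ for which there is a natural equivalence of functors \[ \operatorname{Hom}(C,-)' \simeq \operatorname{Ext}^d(-,A) \] for some integer $d \geq 1$, where $(-)' = \operatorname{Hom}_k(-,k)$ denotes the $k$-dual. Then there is a short exact sequence \[ 0 \rightarrow \Sigma^{d-1}A \longrightarrow B \xrightarrow{g} C \rightarrow 0 \] in $\mathcal{A}$ in which $g$ is right almost split, where $\Sigma^{d-1}A$ is the $(d-1)$'st syzygy in an injective resolution of $A$.
   Context: Given an injective resolution $0 \to A \to I^0 \to I^1 \to \cdots$ of $A$, the syzygies are defined by $\Sigma^0 A = A$ and $\Sigma^{\ell+1}A = \operatorname{Coker}(\Sigma^{\ell}A \to I^{\ell})$ (equivalently the image of $I^{\ell} \to I^{\ell+1}$). A morphism $g : B \to C$ is right almost split if $g$ is not a split epimorphism and every morphism $Y \to C$ which is not a split epimorphism factors through $g$. *)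

theory Defs
  imports Main
begin

text \<open>Objects have type 'o, morphisms type 'm, scalars type 'k (a field).
  cmp g f is the composite "g after f".\<close>

record ('o, 'm, 'k) kcat =
  Ob    :: "'o set"
  Hom   :: "'o \<Rightarrow> 'o \<Rightarrow> 'm set"
  cmp   :: "'m \<Rightarrow> 'm \<Rightarrow> 'm"
  idm   :: "'o \<Rightarrow> 'm"
  madd  :: "'m \<Rightarrow> 'm \<Rightarrow> 'm"
  msmult :: "'k \<Rightarrow> 'm \<Rightarrow> 'm"
  mzero :: "'o \<Rightarrow> 'o \<Rightarrow> 'm"

definition msub :: "('o, 'm, 'k::field) kcat \<Rightarrow> 'm \<Rightarrow> 'm \<Rightarrow> 'm" where
  "msub K f g = madd K f (msmult K (-1) g)"

definition klinear_category :: "('o, 'm, 'k::field) kcat \<Rightarrow> bool" where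
  "klinear_category K \<longleftrightarrow>
     \<comment> \<open>category\<close>
     (\<forall>X\<in>Ob K. \<forall>Y\<in>Ob K. \<forall>X'\<in>Ob K. \<forall>Y'\<in>Ob K.
        Hom K X Y \<inter> Hom K X' Y' \<noteq> {} \<longrightarrow> X = X' \<and> Y = Y') \<and>
     (\<forall>X\<in>Ob K. idm K X \<in> Hom K X X) \<and>
     (\<forall>X\<in>Ob K. \<forall>Y\<in>Ob K. \<forall>Z\<in>Ob K. \<forall>f\<in>Hom K X Y. \<forall>g\<in>Hom K Y Z.
        cmp K g f \<in> Hom K X Z) \<and>
     (\<forall>W\<in>Ob K. \<forall>X\<in>Ob K. \<forall>Y\<in>Ob K. \<forall>Z\<in>Ob K.
        \<forall>f\<in>Hom K W X. \<forall>g\<in>Hom K X Y. \<forall>h\<in>Hom K Y Z.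
        cmp K h (cmp K g f) = cmp K (cmp K h g) f) \<and>
     (\<forall>X\<in>Ob K. \<forall>Y\<in>Ob K. \<forall>f\<in>Hom K X Y.
        cmp K f (idm K X) = f \<and> cmp K (idm K Y) f = f) \<and>
     \<comment> \<open>each Hom set is a k-vector space\<close>
     (\<forall>X\<in>Ob K. \<forall>Y\<in>Ob K.
        mzero K X Y \<in> Hom K X Y \<and>
        (\<forall>f\<in>Hom K X Y. \<forall>g\<in>Hom K X Y. madd K f g \<in> Hom K X Y) \<and>
        (\<forall>a. \<forall>f\<in>Hom K X Y. msmult K a f \<in> Hom K X Y) \<and>
        (\<forall>f\<in>Hom K X Y. \<forall>g\<in>Hom K X Y. \<forall>h\<in>Hom K X Y.
           madd K (madd K f g) h = madd K f (madd K g h)) \<and>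
        (\<forall>f\<in>Hom K X Y. \<forall>g\<in>Hom K X Y. madd K f g = madd K g f) \<and>
        (\<forall>f\<in>Hom K X Y. madd K f (mzero K X Y) = f) \<and>
        (\<forall>f\<in>Hom K X Y. madd K f (msmult K (-1) f) = mzero K X Y) \<and>
        (\<forall>a b. \<forall>f\<in>Hom K X Y. msmult K a (msmult K b f) = msmult K (a * b) f) \<and>
        (\<forall>f\<in>Hom K X Y. msmult K 1 f = f) \<and>
        (\<forall>a. \<forall>f\<in>Hom K X Y. \<forall>g\<in>Hom K X Y.
           msmult K a (madd K f g) = madd K (msmult K a f) (msmult K a g)) \<and>
        (\<forall>a b. \<forall>f\<in>Hom K X Y.
           msmult K (a + b) f = madd K (msmult K a f) (msmult K b f))) \<and>
     \<comment> \<open>composition is k-bilinear\<close>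
     (\<forall>X\<in>Ob K. \<forall>Y\<in>Ob K. \<forall>Z\<in>Ob K.
        (\<forall>f\<in>Hom K X Y. \<forall>f'\<in>Hom K X Y. \<forall>g\<in>Hom K Y Z.
           cmp K g (madd K f f') = madd K (cmp K g f) (cmp K g f')) \<and>
        (\<forall>f\<in>Hom K X Y. \<forall>g\<in>Hom K Y Z. \<forall>g'\<in>Hom K Y Z.
           cmp K (madd K g g') f = madd K (cmp K g f) (cmp K g' f)) \<and>
        (\<forall>a. \<forall>f\<in>Hom K X Y. \<forall>g\<in>Hom K Y Z.
           cmp K g (msmult K a f) = msmult K a (cmp K g f) \<and>
           cmp K (msmult K a g) f = msmult K a (cmp K g f)))"

definition mono :: "('o, 'm, 'k) kcat \<Rightarrow> 'o \<Rightarrow> 'o \<Rightarrow> 'm \<Rightarrow> bool" where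
  "mono K X Y f \<longleftrightarrow> f \<in> Hom K X Y \<and>
     (\<forall>W\<in>Ob K. \<forall>g\<in>Hom K W X. \<forall>h\<in>Hom K W X. cmp K f g = cmp K f h \<longrightarrow> g = h)"

definition epi :: "('o, 'm, 'k) kcat \<Rightarrow> 'o \<Rightarrow> 'o \<Rightarrow> 'm \<Rightarrow> bool" where
  "epi K X Y f \<longleftrightarrow> f \<in> Hom K X Y \<and>
     (\<forall>W\<in>Ob K. \<forall>g\<in>Hom K Y W. \<forall>h\<in>Hom K Y W. cmp K g f = cmp K h f \<longrightarrow> g = h)"

definition is_kernel :: "('o, 'm, 'k) kcat \<Rightarrow> 'o \<Rightarrow> 'o \<Rightarrow> 'o \<Rightarrow> 'm \<Rightarrow> 'm \<Rightarrow> bool" where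
  "is_kernel K N X Y k f \<longleftrightarrow> N \<in> Ob K \<and> k \<in> Hom K N X \<and> f \<in> Hom K X Y \<and>
     cmp K f k = mzero K N Y \<and>
     (\<forall>W\<in>Ob K. \<forall>h\<in>Hom K W X. cmp K f h = mzero K W Y \<longrightarrow>
        (\<exists>!u. u \<in> Hom K W N \<and> cmp K k u = h))"

definition is_cokernel :: "('o, 'm, 'k) kcat \<Rightarrow> 'o \<Rightarrow> 'o \<Rightarrow> 'o \<Rightarrow> 'm \<Rightarrow> 'm \<Rightarrow> bool" where
  "is_cokernel K X Y Q c f \<longleftrightarrow> Q \<in> Ob K \<and> f \<in> Hom K X Y \<and> c \<in> Hom K Y Q \<and>
     cmp K c f = mzero K X Q \<and>
     (\<forall>W\<in>Ob K. \<forall>h\<in>Hom K Y W. cmp K h f = mzero K X W \<longrightarrow>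
        (\<exists>!u. u \<in> Hom K Q W \<and> cmp K u c = h))"

definition abelian :: "('o, 'm, 'k::field) kcat \<Rightarrow> bool" where
  "abelian K \<longleftrightarrow>
     \<comment> \<open>zero object\<close>
     (\<exists>Z\<in>Ob K. \<forall>X\<in>Ob K. (\<exists>!f. f \<in> Hom K Z X) \<and> (\<exists>!f. f \<in> Hom K X Z)) \<and>
     \<comment> \<open>binary biproducts\<close>
     (\<forall>X\<in>Ob K. \<forall>Y\<in>Ob K. \<exists>P\<in>Ob K. \<exists>i1 i2 p1 p2.
        i1 \<in> Hom K X P \<and> i2 \<in> Hom K Y P \<and> p1 \<in> Hom K P X \<and> p2 \<in> Hom K P Y \<and>
        cmp K p1 i1 = idm K X \<and> cmp K p2 i2 = idm K Y \<and>
        cmp K p1 i2 = mzero K Y X \<and> cmp K p2 i1 = mzero K X Y \<and>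
        madd K (cmp K i1 p1) (cmp K i2 p2) = idm K P) \<and>
     \<comment> \<open>kernels and cokernels exist\<close>
     (\<forall>X\<in>Ob K. \<forall>Y\<in>Ob K. \<forall>f\<in>Hom K X Y.
        (\<exists>N k. is_kernel K N X Y k f) \<and> (\<exists>Q c. is_cokernel K X Y Q c f)) \<and>
     \<comment> \<open>every mono is a kernel, every epi is a cokernel\<close>
     (\<forall>X\<in>Ob K. \<forall>Y\<in>Ob K. \<forall>f. mono K X Y f \<longrightarrow>
        (\<exists>Z\<in>Ob K. \<exists>g. is_kernel K X Y Z f g)) \<and>
     (\<forall>X\<in>Ob K. \<forall>Y\<in>Ob K. \<forall>f. epi K X Y f \<longrightarrow>
        (\<exists>Z\<in>Ob K. \<exists>g. is_cokernel K Z X Y f g))"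

definition injective_obj :: "('o, 'm, 'k) kcat \<Rightarrow> 'o \<Rightarrow> bool" where
  "injective_obj K I \<longleftrightarrow> I \<in> Ob K \<and>
     (\<forall>X\<in>Ob K. \<forall>Y\<in>Ob K. \<forall>m h. mono K X Y m \<longrightarrow> h \<in> Hom K X I \<longrightarrow>
        (\<exists>h'\<in>Hom K Y I. cmp K h' m = h))"

definition enough_injectives :: "('o, 'm, 'k) kcat \<Rightarrow> bool" where
  "enough_injectives K \<longleftrightarrow>
     (\<forall>X\<in>Ob K. \<exists>I m. injective_obj K I \<and> mono K X I m)"

definition klinear_abelian_enough_inj :: "('o, 'm, 'k::field) kcat \<Rightarrow> bool" where
  "klinear_abelian_enough_inj K \<longleftrightarrow>
     klinear_category K \<and> abelian K \<and> enough_injectives K"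

definition iso_endo :: "('o, 'm, 'k) kcat \<Rightarrow> 'o \<Rightarrow> 'm \<Rightarrow> bool" where
  "iso_endo K C f \<longleftrightarrow> f \<in> Hom K C C \<and>
     (\<exists>g\<in>Hom K C C. cmp K g f = idm K C \<and> cmp K f g = idm K C)"

text \<open>The ring (Hom(C,C), +, \<circ>) is local: 1 \<noteq> 0 and the non-units are closed
  under addition (i.e. the non-units form the unique maximal ideal).\<close>
definition local_endring :: "('o, 'm, 'k) kcat \<Rightarrow> 'o \<Rightarrow> bool" where
  "local_endring K C \<longleftrightarrow> idm K C \<noteq> mzero K C C \<and>
     (\<forall>f\<in>Hom K C C. \<forall>g\<in>Hom K C C.
        \<not> iso_endo K C f \<longrightarrow> \<not> iso_endo K C g \<longrightarrow> \<not> iso_endo K C (madd K f g))"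

definition split_epi :: "('o, 'm, 'k) kcat \<Rightarrow> 'o \<Rightarrow> 'o \<Rightarrow> 'm \<Rightarrow> bool" where
  "split_epi K Y C h \<longleftrightarrow> h \<in> Hom K Y C \<and> (\<exists>s\<in>Hom K C Y. cmp K h s = idm K C)"

definition right_almost_split :: "('o, 'm, 'k) kcat \<Rightarrow> 'o \<Rightarrow> 'o \<Rightarrow> 'm \<Rightarrow> bool" where
  "right_almost_split K B C g \<longleftrightarrow> g \<in> Hom K B C \<and> \<not> split_epi K B C g \<and>
     (\<forall>Y\<in>Ob K. \<forall>h\<in>Hom K Y C. \<not> split_epi K Y C h \<longrightarrow>
        (\<exists>u\<in>Hom K Y B. cmp K g u = h))"

text \<open>An injective resolution 0 \<rightarrow> A \<rightarrow> I^0 \<rightarrow> I^1 \<rightarrow> ... is recorded together with its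
  syzygies: S 0 = A, \<iota> n : S n \<rightarrow> I n is the (monic) map from the n-th syzygy,
  and \<pi> n : I n \<rightarrow> S (n+1) is a cokernel of \<iota> n, so that
  S (n+1) = Coker(S n \<rightarrow> I n).\<close>
definition inj_resolution ::
  "('o, 'm, 'k) kcat \<Rightarrow> 'o \<Rightarrow> (nat \<Rightarrow> 'o) \<Rightarrow> (nat \<Rightarrow> 'o) \<Rightarrow> (nat \<Rightarrow> 'm) \<Rightarrow> (nat \<Rightarrow> 'm) \<Rightarrow> bool"
  where
  "inj_resolution K A S I \<iota> \<pi> \<longleftrightarrow> S 0 = A \<and>
     (\<forall>n. S n \<in> Ob K \<and> injective_obj K (I n) \<and>
          mono K (S n) (I n) (\<iota> n) \<and>
          is_cokernel K (S n) (I n) (S (Suc n)) (\<pi> n) (\<iota> n))"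

definition res_diff :: "('o, 'm, 'k) kcat \<Rightarrow> (nat \<Rightarrow> 'm) \<Rightarrow> (nat \<Rightarrow> 'm) \<Rightarrow> nat \<Rightarrow> 'm" where
  "res_diff K \<iota> \<pi> n = cmp K (\<iota> (Suc n)) (\<pi> n)"

definition ext_cocycles ::
  "('o, 'm, 'k) kcat \<Rightarrow> (nat \<Rightarrow> 'o) \<Rightarrow> (nat \<Rightarrow> 'm) \<Rightarrow> (nat \<Rightarrow> 'm) \<Rightarrow> nat \<Rightarrow> 'o \<Rightarrow> 'm set" where
  "ext_cocycles K I \<iota> \<pi> d X =
     {f \<in> Hom K X (I d). cmp K (res_diff K \<iota> \<pi> d) f = mzero K X (I (Suc d))}"

text \<open>Coboundaries in degree d \<ge> 1.\<close>
definition ext_coboundaries ::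
  "('o, 'm, 'k) kcat \<Rightarrow> (nat \<Rightarrow> 'o) \<Rightarrow> (nat \<Rightarrow> 'm) \<Rightarrow> (nat \<Rightarrow> 'm) \<Rightarrow> nat \<Rightarrow> 'o \<Rightarrow> 'm set" where
  "ext_coboundaries K I \<iota> \<pi> d X =
     {cmp K (res_diff K \<iota> \<pi> (d - 1)) g | g. g \<in> Hom K X (I (d - 1))}"

definition ext_class ::
  "('o, 'm, 'k::field) kcat \<Rightarrow> (nat \<Rightarrow> 'o) \<Rightarrow> (nat \<Rightarrow> 'm) \<Rightarrow> (nat \<Rightarrow> 'm) \<Rightarrow> nat \<Rightarrow> 'o \<Rightarrow> 'm \<Rightarrow> 'm set" where
  "ext_class K I \<iota> \<pi> d X f =
     {f' \<in> ext_cocycles K I \<iota> \<pi> d X. msub K f' f \<in> ext_coboundaries K I \<iota> \<pi> d X}"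

definition Ext ::
  "('o, 'm, 'k::field) kcat \<Rightarrow> (nat \<Rightarrow> 'o) \<Rightarrow> (nat \<Rightarrow> 'm) \<Rightarrow> (nat \<Rightarrow> 'm) \<Rightarrow> nat \<Rightarrow> 'o \<Rightarrow> 'm set set" where
  "Ext K I \<iota> \<pi> d X = ext_class K I \<iota> \<pi> d X ` ext_cocycles K I \<iota> \<pi> d X"

definition hom_dual :: "('o, 'm, 'k::field) kcat \<Rightarrow> 'o \<Rightarrow> 'o \<Rightarrow> ('m \<Rightarrow> 'k) set" where
  "hom_dual K C X = {\<phi>.
     (\<forall>h\<in>Hom K C X. \<forall>h'\<in>Hom K C X. \<phi> (madd K h h') = \<phi> h + \<phi> h') \<and>
     (\<forall>a. \<forall>h\<in>Hom K C X. \<phi> (msmult K a h) = a * \<phi> h) \<and>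
     (\<forall>h. h \<notin> Hom K C X \<longrightarrow> \<phi> h = 0)}"

definition hom_dual_map :: "('o, 'm, 'k::field) kcat \<Rightarrow> 'o \<Rightarrow> 'o \<Rightarrow> 'm \<Rightarrow> ('m \<Rightarrow> 'k) \<Rightarrow> ('m \<Rightarrow> 'k)" where
  "hom_dual_map K C X u \<phi> = (\<lambda>h. if h \<in> Hom K C X then \<phi> (cmp K u h) else 0)"

definition nat_equiv_dual_ext ::
  "('o, 'm, 'k::field) kcat \<Rightarrow> 'o \<Rightarrow> (nat \<Rightarrow> 'o) \<Rightarrow> (nat \<Rightarrow> 'm) \<Rightarrow> (nat \<Rightarrow> 'm) \<Rightarrow> nat
     \<Rightarrow> ('o \<Rightarrow> ('m \<Rightarrow> 'k) \<Rightarrow> 'm set) \<Rightarrow> bool" where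
  "nat_equiv_dual_ext K C I \<iota> \<pi> d \<eta> \<longleftrightarrow>
     (\<forall>X\<in>Ob K.
        \<comment> \<open>each component is a bijection ...\<close>
        bij_betw (\<eta> X) (hom_dual K C X) (Ext K I \<iota> \<pi> d X) \<and>
        \<comment> \<open>... which is k-linear\<close>
        (\<forall>\<phi>\<in>hom_dual K C X. \<forall>\<psi>\<in>hom_dual K C X. \<forall>a b.
           \<forall>f\<in>ext_cocycles K I \<iota> \<pi> d X. \<forall>g\<in>ext_cocycles K I \<iota> \<pi> d X.
           \<eta> X \<phi> = ext_class K I \<iota> \<pi> d X f \<longrightarrow> \<eta> X \<psi> = ext_class K I \<iota> \<pi> d X g \<longrightarrow>
           \<eta> X (\<lambda>h. a * \<phi> h + b * \<psi> h) =
             ext_class K I \<iota> \<pi> d X (madd K (msmult K a f) (msmult K b g)))) \<and>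
     \<comment> \<open>naturality in X (both functors are contravariant)\<close>
     (\<forall>X\<in>Ob K. \<forall>Y\<in>Ob K. \<forall>u\<in>Hom K X Y. \<forall>\<phi>\<in>hom_dual K C Y.
        \<forall>f\<in>ext_cocycles K I \<iota> \<pi> d Y.
        \<eta> Y \<phi> = ext_class K I \<iota> \<pi> d Y f \<longrightarrow>
        \<eta> X (hom_dual_map K C X u \<phi>) = ext_class K I \<iota> \<pi> d X (cmp K f u))"

end

theory Submission
  imports Defs
begin

text \<open>
  Since End(C) is local, its non-units form a k-subspace not containing 1, so Zorn's lemma
  gives a k-linear functional \<phi> on End(C) with \<phi>(1) = 1 that vanishes on all non-units.
  Under the duality \<phi> corresponds to a class in Ext^d(C, A), represented by a cocycle
  e : C \<rightarrow> I^d, which factors through the syzygy \<Sigma>^d A. Pulling the epimorphism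
  I^(d-1) \<rightarrow> \<Sigma>^d A back along this factorisation gives an epimorphism g : B \<rightarrow> C with kernel
  \<Sigma>^(d-1) A, and a map h : Y \<rightarrow> C lifts along g exactly when e h is a coboundary.
  By naturality the class of e h corresponds to the functional \<psi> \<mapsto> \<phi>(h \<psi>) on Hom(C, Y).
  If h is not a split epimorphism, no h \<psi> is invertible, so this functional is zero and h lifts;
  for h = 1 it is \<phi> \<noteq> 0, so g itself does not split.
\<close>

locale klinear_cat =
  fixes K :: "('o, 'm, 'k::field) kcat"
  assumes klinear: "klinear_category K"
begin

lemma idm_in_Hom: "X \<in> Ob K \<Longrightarrow> idm K X \<in> Hom K X X"
  using klinear unfolding klinear_category_def by simp

lemma cmp_in_Hom:
  "\<lbrakk>X \<in> Ob K; Y \<in> Ob K; Z \<in> Ob K; f \<in> Hom K X Y; g \<in> Hom K Y Z\<rbrakk> \<Longrightarrow> cmp K g f \<in> Hom K X Z"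
  using klinear unfolding klinear_category_def by simp

lemma cmp_assoc:
  "\<lbrakk>W \<in> Ob K; X \<in> Ob K; Y \<in> Ob K; Z \<in> Ob K; f \<in> Hom K W X; g \<in> Hom K X Y; h \<in> Hom K Y Z\<rbrakk>
   \<Longrightarrow> cmp K (cmp K h g) f = cmp K h (cmp K g f)"
  using klinear unfolding klinear_category_def by simp

lemma cmp_idm_right: "\<lbrakk>X \<in> Ob K; Y \<in> Ob K; f \<in> Hom K X Y\<rbrakk> \<Longrightarrow> cmp K f (idm K X) = f"
  using klinear unfolding klinear_category_def by simp

lemma cmp_idm_left: "\<lbrakk>X \<in> Ob K; Y \<in> Ob K; f \<in> Hom K X Y\<rbrakk> \<Longrightarrow> cmp K (idm K Y) f = f"
  using klinear unfolding klinear_category_def by simp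

lemma mzero_in_Hom: "\<lbrakk>X \<in> Ob K; Y \<in> Ob K\<rbrakk> \<Longrightarrow> mzero K X Y \<in> Hom K X Y"
  using klinear unfolding klinear_category_def by simp

lemma madd_in_Hom: "\<lbrakk>X \<in> Ob K; Y \<in> Ob K; f \<in> Hom K X Y; g \<in> Hom K X Y\<rbrakk> \<Longrightarrow> madd K f g \<in> Hom K X Y"
  using klinear unfolding klinear_category_def by simp

lemma msmult_in_Hom: "\<lbrakk>X \<in> Ob K; Y \<in> Ob K; f \<in> Hom K X Y\<rbrakk> \<Longrightarrow> msmult K a f \<in> Hom K X Y"
  using klinear unfolding klinear_category_def by simp

lemma madd_assoc:
  "\<lbrakk>X \<in> Ob K; Y \<in> Ob K; f \<in> Hom K X Y; g \<in> Hom K X Y; h \<in> Hom K X Y\<rbrakk>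
   \<Longrightarrow> madd K (madd K f g) h = madd K f (madd K g h)"
  using klinear unfolding klinear_category_def by meson

lemma madd_commute: "\<lbrakk>X \<in> Ob K; Y \<in> Ob K; f \<in> Hom K X Y; g \<in> Hom K X Y\<rbrakk> \<Longrightarrow> madd K f g = madd K g f"
  using klinear unfolding klinear_category_def by simp

lemma madd_mzero_right: "\<lbrakk>X \<in> Ob K; Y \<in> Ob K; f \<in> Hom K X Y\<rbrakk> \<Longrightarrow> madd K f (mzero K X Y) = f"
  using klinear unfolding klinear_category_def by simp

lemma madd_neg_right: "\<lbrakk>X \<in> Ob K; Y \<in> Ob K; f \<in> Hom K X Y\<rbrakk> \<Longrightarrow> madd K f (msmult K (-1) f) = mzero K X Y"
  using klinear unfolding klinear_category_def by simp

lemma msmult_msmult: "\<lbrakk>X \<in> Ob K; Y \<in> Ob K; f \<in> Hom K X Y\<rbrakk> \<Longrightarrow> msmult K a (msmult K b f) = msmult K (a * b) f"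
  using klinear unfolding klinear_category_def by simp

lemma msmult_one: "\<lbrakk>X \<in> Ob K; Y \<in> Ob K; f \<in> Hom K X Y\<rbrakk> \<Longrightarrow> msmult K 1 f = f"
  using klinear unfolding klinear_category_def by simp

lemma msmult_add_right:
  "\<lbrakk>X \<in> Ob K; Y \<in> Ob K; f \<in> Hom K X Y; g \<in> Hom K X Y\<rbrakk>
   \<Longrightarrow> msmult K a (madd K f g) = madd K (msmult K a f) (msmult K a g)"
  using klinear unfolding klinear_category_def by simp

lemma msmult_add_left:
  "\<lbrakk>X \<in> Ob K; Y \<in> Ob K; f \<in> Hom K X Y\<rbrakk> \<Longrightarrow> msmult K (a + b) f = madd K (msmult K a f) (msmult K b f)"
  using klinear unfolding klinear_category_def by simp

lemma cmp_add_right: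
  "\<lbrakk>X \<in> Ob K; Y \<in> Ob K; Z \<in> Ob K; f \<in> Hom K X Y; f' \<in> Hom K X Y; g \<in> Hom K Y Z\<rbrakk>
   \<Longrightarrow> cmp K g (madd K f f') = madd K (cmp K g f) (cmp K g f')"
  using klinear unfolding klinear_category_def by simp

lemma cmp_add_left:
  "\<lbrakk>X \<in> Ob K; Y \<in> Ob K; Z \<in> Ob K; f \<in> Hom K X Y; g \<in> Hom K Y Z; g' \<in> Hom K Y Z\<rbrakk>
   \<Longrightarrow> cmp K (madd K g g') f = madd K (cmp K g f) (cmp K g' f)"
  using klinear unfolding klinear_category_def by simp

lemma cmp_smult_right:
  "\<lbrakk>X \<in> Ob K; Y \<in> Ob K; Z \<in> Ob K; f \<in> Hom K X Y; g \<in> Hom K Y Z\<rbrakk>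
   \<Longrightarrow> cmp K g (msmult K a f) = msmult K a (cmp K g f)"
  using klinear unfolding klinear_category_def by simp

lemma cmp_smult_left:
  "\<lbrakk>X \<in> Ob K; Y \<in> Ob K; Z \<in> Ob K; f \<in> Hom K X Y; g \<in> Hom K Y Z\<rbrakk>
   \<Longrightarrow> cmp K (msmult K a g) f = msmult K a (cmp K g f)"
  using klinear unfolding klinear_category_def by simp

lemma msmult_zero_left:
  assumes X: "X \<in> Ob K" and Y: "Y \<in> Ob K" and f: "f \<in> Hom K X Y"
  shows "msmult K 0 f = mzero K X Y"
proof -
  define z where "z = msmult K 0 f"
  have z: "z \<in> Hom K X Y" and nz: "msmult K (-1) z \<in> Hom K X Y"
    unfolding z_def using msmult_in_Hom X Y f by blast+
  have zz: "madd K z z = z"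
    unfolding z_def using msmult_add_left[OF X Y f, of 0 0] by simp
  have "mzero K X Y = madd K z (msmult K (-1) z)" using madd_neg_right[OF X Y z] by simp
  also have "\<dots> = madd K (madd K z z) (msmult K (-1) z)" using zz by simp
  also have "\<dots> = madd K z (mzero K X Y)"
    using madd_assoc[OF X Y z z nz] madd_neg_right[OF X Y z] by simp
  also have "\<dots> = z" using madd_mzero_right[OF X Y z] .
  finally have "z = mzero K X Y" ..
  then show ?thesis unfolding z_def .
qed

lemma madd_mzero_left: "\<lbrakk>X \<in> Ob K; Y \<in> Ob K; f \<in> Hom K X Y\<rbrakk> \<Longrightarrow> madd K (mzero K X Y) f = f"
  using madd_commute[OF _ _ mzero_in_Hom] madd_mzero_right by simp

lemma madd_neg_left: "\<lbrakk>X \<in> Ob K; Y \<in> Ob K; f \<in> Hom K X Y\<rbrakk> \<Longrightarrow> madd K (msmult K (-1) f) f = mzero K X Y"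
  using madd_commute[OF _ _ msmult_in_Hom] madd_neg_right by simp

lemma msmult_zero_right:
  assumes X: "X \<in> Ob K" and Y: "Y \<in> Ob K"
  shows "msmult K a (mzero K X Y) = mzero K X Y"
proof -
  note z = mzero_in_Hom[OF X Y]
  have "msmult K a (mzero K X Y) = msmult K a (msmult K 0 (mzero K X Y))"
    using msmult_zero_left[OF X Y z] by simp
  also have "\<dots> = msmult K 0 (mzero K X Y)" using msmult_msmult[OF X Y z] by simp
  also have "\<dots> = mzero K X Y" using msmult_zero_left[OF X Y z] .
  finally show ?thesis .
qed

lemma cmp_zero_right:
  assumes "X \<in> Ob K" "Y \<in> Ob K" "Z \<in> Ob K" "g \<in> Hom K Y Z"
  shows "cmp K g (mzero K X Y) = mzero K X Z"
  using cmp_smult_right[OF assms(1-3) mzero_in_Hom[OF assms(1,2)] assms(4), of 0]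
    msmult_zero_left[OF assms(1,2) mzero_in_Hom[OF assms(1,2)]]
    msmult_zero_left[OF assms(1,3) cmp_in_Hom[OF assms(1-3) mzero_in_Hom[OF assms(1,2)] assms(4)]]
  by simp

lemma cmp_zero_left:
  assumes "X \<in> Ob K" "Y \<in> Ob K" "Z \<in> Ob K" "f \<in> Hom K X Y"
  shows "cmp K (mzero K Y Z) f = mzero K X Z"
  using cmp_smult_left[OF assms(1-3) assms(4) mzero_in_Hom[OF assms(2,3)], of 0]
    msmult_zero_left[OF assms(2,3) mzero_in_Hom[OF assms(2,3)]]
    msmult_zero_left[OF assms(1,3) cmp_in_Hom[OF assms(1-3) assms(4) mzero_in_Hom[OF assms(2,3)]]]
  by simp

lemma msub_in_Hom: "\<lbrakk>X \<in> Ob K; Y \<in> Ob K; f \<in> Hom K X Y; g \<in> Hom K X Y\<rbrakk> \<Longrightarrow> msub K f g \<in> Hom K X Y"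
  unfolding msub_def by (intro madd_in_Hom msmult_in_Hom)

lemma msub_self: "\<lbrakk>X \<in> Ob K; Y \<in> Ob K; f \<in> Hom K X Y\<rbrakk> \<Longrightarrow> msub K f f = mzero K X Y"
  unfolding msub_def by (rule madd_neg_right)

lemma msub_zero_right: "\<lbrakk>X \<in> Ob K; Y \<in> Ob K; f \<in> Hom K X Y\<rbrakk> \<Longrightarrow> msub K f (mzero K X Y) = f"
  unfolding msub_def by (simp add: msmult_zero_right madd_mzero_right)

lemma msub_madd_cancel:
  assumes X: "X \<in> Ob K" and Y: "Y \<in> Ob K" and f: "f \<in> Hom K X Y" and g: "g \<in> Hom K X Y"
  shows "madd K (msub K f g) g = f"
  unfolding msub_def
  using madd_assoc[OF X Y f msmult_in_Hom[OF X Y g] g] madd_neg_left[OF X Y g] madd_mzero_right[OF X Y f]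
  by simp

lemma msub_eq_zero_imp_eq:
  assumes X: "X \<in> Ob K" and Y: "Y \<in> Ob K" and f: "f \<in> Hom K X Y" and g: "g \<in> Hom K X Y"
    and "msub K f g = mzero K X Y"
  shows "f = g"
  using msub_madd_cancel[OF X Y f g] madd_mzero_left[OF X Y g] assms(5) by simp

lemma madd_left_commute:
  "\<lbrakk>X \<in> Ob K; Y \<in> Ob K; f \<in> Hom K X Y; g \<in> Hom K X Y; h \<in> Hom K X Y\<rbrakk>
   \<Longrightarrow> madd K f (madd K g h) = madd K g (madd K f h)"
  using madd_assoc[of X Y f g h] madd_assoc[of X Y g f h] madd_commute[of X Y f g] by simp

lemma madd_msub_cancel_left:
  assumes X: "X \<in> Ob K" and Y: "Y \<in> Ob K" and f: "f \<in> Hom K X Y" and g: "g \<in> Hom K X Y"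
  shows "msub K (madd K f g) f = g"
  unfolding msub_def
  using madd_commute[OF X Y f g] madd_assoc[OF X Y g f msmult_in_Hom[OF X Y f]]
    madd_neg_right[OF X Y f] madd_mzero_right[OF X Y g]
  by simp

lemma cmp_msub_left:
  "\<lbrakk>X \<in> Ob K; Y \<in> Ob K; Z \<in> Ob K; f \<in> Hom K X Y; g \<in> Hom K Y Z; g' \<in> Hom K Y Z\<rbrakk>
   \<Longrightarrow> cmp K (msub K g g') f = msub K (cmp K g f) (cmp K g' f)"
  unfolding msub_def by (simp add: cmp_add_left cmp_smult_left msmult_in_Hom)

end

lemma is_kernelD:
  assumes "is_kernel K N X Y k f"
  shows "N \<in> Ob K" "k \<in> Hom K N X" "f \<in> Hom K X Y" "cmp K f k = mzero K N Y"
    "\<And>W h. \<lbrakk>W \<in> Ob K; h \<in> Hom K W X; cmp K f h = mzero K W Y\<rbrakk> \<Longrightarrow> \<exists>!u. u \<in> Hom K W N \<and> cmp K k u = h"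
  using assms unfolding is_kernel_def by simp_all

lemma is_cokernelD:
  assumes "is_cokernel K X Y Q c f"
  shows "Q \<in> Ob K" "f \<in> Hom K X Y" "c \<in> Hom K Y Q" "cmp K c f = mzero K X Q"
    "\<And>W h. \<lbrakk>W \<in> Ob K; h \<in> Hom K Y W; cmp K h f = mzero K X W\<rbrakk> \<Longrightarrow> \<exists>!u. u \<in> Hom K Q W \<and> cmp K u c = h"
  using assms unfolding is_cokernel_def by simp_all

context klinear_cat
begin

lemma kernel_is_mono:
  assumes k: "is_kernel K N X Y k f" and X: "X \<in> Ob K" and Y: "Y \<in> Ob K"
  shows "mono K N X k"
  unfolding mono_def
proof (intro conjI ballI impI)
  note kd = is_kernelD[OF k]
  show "k \<in> Hom K N X" by (fact kd(2))
  fix W g h assume W: "W \<in> Ob K" and g: "g \<in> Hom K W N" and h: "h \<in> Hom K W N"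
    and eq: "cmp K k g = cmp K k h"
  have "cmp K f (cmp K k g) = mzero K W Y"
    using cmp_assoc[OF W kd(1) X Y g kd(2,3)] kd(4) cmp_zero_left[OF W kd(1) Y g] by simp
  then have "\<exists>!u. u \<in> Hom K W N \<and> cmp K k u = cmp K k g"
    by (rule kd(5)[OF W cmp_in_Hom[OF W kd(1) X g kd(2)]])
  then show "g = h" using g h eq by auto
qed

lemma cokernel_is_epi:
  assumes c: "is_cokernel K X Y Q c f" and X: "X \<in> Ob K" and Y: "Y \<in> Ob K"
  shows "epi K Y Q c"
  unfolding epi_def
proof (intro conjI ballI impI)
  note cd = is_cokernelD[OF c]
  show "c \<in> Hom K Y Q" by (fact cd(3))
  fix W g h assume W: "W \<in> Ob K" and g: "g \<in> Hom K Q W" and h: "h \<in> Hom K Q W"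
    and eq: "cmp K g c = cmp K h c"
  have "cmp K (cmp K g c) f = mzero K X W"
    using cmp_assoc[OF X Y cd(1) W cd(2,3) g] cd(4) cmp_zero_right[OF X cd(1) W g] by simp
  then have "\<exists>!u. u \<in> Hom K Q W \<and> cmp K u c = cmp K g c"
    by (rule cd(5)[OF W cmp_in_Hom[OF Y cd(1) W cd(3) g]])
  then show "g = h" using g h eq by auto
qed

end

section \<open>Linear functionals on Hom spaces\<close>

definition hom_subspace :: "('o, 'm, 'k::field) kcat \<Rightarrow> 'o \<Rightarrow> 'o \<Rightarrow> 'm set \<Rightarrow> bool" where
  "hom_subspace K X Y M \<longleftrightarrow> M \<subseteq> Hom K X Y \<and> mzero K X Y \<in> M \<and>
     (\<forall>f\<in>M. \<forall>g\<in>M. madd K f g \<in> M) \<and> (\<forall>a. \<forall>f\<in>M. msmult K a f \<in> M)"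

lemma hom_subspaceD:
  assumes "hom_subspace K X Y M"
  shows "M \<subseteq> Hom K X Y" "mzero K X Y \<in> M"
    "\<And>f g. \<lbrakk>f \<in> M; g \<in> M\<rbrakk> \<Longrightarrow> madd K f g \<in> M" "\<And>a f. f \<in> M \<Longrightarrow> msmult K a f \<in> M"
  using assms unfolding hom_subspace_def by auto

lemma hom_subspace_Union_chain:
  assumes "\<C> \<noteq> {}" and "chain\<^sub>\<subseteq> \<C>" and sub: "\<And>M. M \<in> \<C> \<Longrightarrow> hom_subspace K X Y M"
  shows "hom_subspace K X Y (\<Union>\<C>)"
  unfolding hom_subspace_def
proof (intro conjI ballI allI)
  show "\<Union>\<C> \<subseteq> Hom K X Y" using hom_subspaceD(1)[OF sub] by blast
  show "mzero K X Y \<in> \<Union>\<C>" using assms(1) hom_subspaceD(2)[OF sub] by blast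
  show "msmult K a f \<in> \<Union>\<C>" if "f \<in> \<Union>\<C>" for a f
    using that hom_subspaceD(4)[OF sub] by blast
  fix f g assume "f \<in> \<Union>\<C>" "g \<in> \<Union>\<C>"
  then obtain M M' where MM': "M \<in> \<C>" "M' \<in> \<C>" and "f \<in> M" "g \<in> M'" by blast
  have "M \<subseteq> M' \<or> M' \<subseteq> M" using assms(2) MM' unfolding chain_subset_def by blast
  then show "madd K f g \<in> \<Union>\<C>"
  proof
    assume "M \<subseteq> M'"
    then have "madd K f g \<in> M'" using hom_subspaceD(3)[OF sub[OF MM'(2)]] \<open>f \<in> M\<close> \<open>g \<in> M'\<close> by blast
    then show ?thesis using MM'(2) by blast
  next
    assume "M' \<subseteq> M"
    then have "madd K f g \<in> M" using hom_subspaceD(3)[OF sub[OF MM'(1)]] \<open>f \<in> M\<close> \<open>g \<in> M'\<close> by blast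
    then show ?thesis using MM'(1) by blast
  qed
qed

lemma maximal_hom_subspace_avoiding:
  assumes "hom_subspace K X Y R" and "v \<notin> R"
  shows "\<exists>M. hom_subspace K X Y M \<and> R \<subseteq> M \<and> v \<notin> M \<and>
           (\<forall>M'. hom_subspace K X Y M' \<and> M \<subseteq> M' \<and> v \<notin> M' \<longrightarrow> M' = M)"
proof -
  define \<F> where "\<F> = {M. hom_subspace K X Y M \<and> R \<subseteq> M \<and> v \<notin> M}"
  have "\<exists>M\<in>\<F>. \<forall>M'\<in>\<F>. M \<subseteq> M' \<longrightarrow> M' = M"
  proof (rule subset_Zorn_nonempty)
    show "\<F> \<noteq> {}" using assms unfolding \<F>_def by auto
    fix \<C> assume ne: "\<C> \<noteq> {}" and "subset.chain \<F> \<C>"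
    then have "\<C> \<subseteq> \<F>" and ch: "chain\<^sub>\<subseteq> \<C>"
      by (simp_all add: subset_chain_def chain_subset_def)
    have "hom_subspace K X Y (\<Union>\<C>)"
      by (rule hom_subspace_Union_chain[OF ne ch]) (use \<open>\<C> \<subseteq> \<F>\<close> in \<open>auto simp: \<F>_def\<close>)
    moreover have "R \<subseteq> \<Union>\<C>" and "v \<notin> \<Union>\<C>" using ne \<open>\<C> \<subseteq> \<F>\<close> unfolding \<F>_def by blast+
    ultimately show "\<Union>\<C> \<in> \<F>" unfolding \<F>_def by blast
  qed
  then obtain M where "M \<in> \<F>" and "\<And>M'. M' \<in> \<F> \<Longrightarrow> M \<subseteq> M' \<Longrightarrow> M' = M"
    by blast
  then show ?thesis unfolding \<F>_def by (intro exI[of _ M]) blast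
qed

context klinear_cat
begin

lemma hom_subspace_insert_span:
  assumes X: "X \<in> Ob K" and Y: "Y \<in> Ob K" and M: "hom_subspace K X Y M" and f: "f \<in> Hom K X Y"
  defines "M' \<equiv> {madd K m (msmult K b f) | m b. m \<in> M}"
  shows "hom_subspace K X Y M'" and "M \<subseteq> M'" and "f \<in> M'"
proof -
  note MH = hom_subspaceD(1)[OF M] and M0 = hom_subspaceD(2)[OF M]
    and Madd = hom_subspaceD(3)[OF M] and Msmult = hom_subspaceD(4)[OF M]
  note hom_rules = madd_in_Hom[OF X Y] msmult_in_Hom[OF X Y] subsetD[OF MH]
  show "M \<subseteq> M'"
  proof
    fix m assume "m \<in> M"
    then have "m = madd K m (msmult K 0 f)"
      using msmult_zero_left[OF X Y f] madd_mzero_right[OF X Y] MH by auto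
    then show "m \<in> M'" unfolding M'_def using \<open>m \<in> M\<close> by blast
  qed
  have "f = madd K (mzero K X Y) (msmult K 1 f)"
    using msmult_one[OF X Y f] madd_mzero_left[OF X Y f] by simp
  then show "f \<in> M'" unfolding M'_def using M0 by blast
  show "hom_subspace K X Y M'"
    unfolding hom_subspace_def
  proof (intro conjI ballI allI)
    show "M' \<subseteq> Hom K X Y" unfolding M'_def using f hom_rules by blast
    show "mzero K X Y \<in> M'" using \<open>M \<subseteq> M'\<close> M0 by blast
  next
    fix x y assume "x \<in> M'" "y \<in> M'"
    then obtain m1 b1 m2 b2 where m: "m1 \<in> M" "m2 \<in> M"
      and xy: "x = madd K m1 (msmult K b1 f)" "y = madd K m2 (msmult K b2 f)"
      unfolding M'_def by blast
    have "madd K x y = madd K (madd K m1 m2) (msmult K (b1 + b2) f)"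
      using m f unfolding xy
      by (simp add: hom_rules msmult_add_left[OF X Y] madd_assoc[OF X Y] madd_left_commute[OF X Y])
    then show "madd K x y \<in> M'" unfolding M'_def using Madd m by blast
  next
    fix a x assume "x \<in> M'"
    then obtain m b where m: "m \<in> M" and x: "x = madd K m (msmult K b f)"
      unfolding M'_def by blast
    have "msmult K a x = madd K (msmult K a m) (msmult K (a * b) f)"
      using m f unfolding x by (simp add: hom_rules msmult_add_right[OF X Y] msmult_msmult[OF X Y])
    then show "msmult K a x \<in> M'" unfolding M'_def using Msmult m by blast
  qed
qed

lemma hom_subspace_diff:
  assumes "hom_subspace K X Y M" and "f \<in> M" and "g \<in> M"
  shows "msub K f g \<in> M"
  unfolding msub_def using hom_subspaceD[OF assms(1)] assms(2,3) by blast

lemma hom_subspace_coordinate_unique: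
  assumes X: "X \<in> Ob K" and Y: "Y \<in> Ob K" and v: "v \<in> Hom K X Y"
    and M: "hom_subspace K X Y M" and vM: "v \<notin> M" and f: "f \<in> Hom K X Y"
    and a: "msub K f (msmult K a v) \<in> M" and b: "msub K f (msmult K b v) \<in> M"
  shows "a = b"
proof (rule ccontr)
  assume "a \<noteq> b"
  note hom_rules = madd_in_Hom[OF X Y] msmult_in_Hom[OF X Y]
  have "msub K f (msmult K b v) = madd K (madd K f (msmult K (-1) (msmult K a v))) (msmult K (a - b) v)"
    using f v
    by (simp add: msub_def hom_rules madd_assoc[OF X Y] msmult_msmult[OF X Y] flip: msmult_add_left[OF X Y])
  then have "msub K (msub K f (msmult K b v)) (msub K f (msmult K a v)) = msmult K (a - b) v"
    using madd_msub_cancel_left[OF X Y] f v hom_rules unfolding msub_def by simp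
  then have "msmult K (a - b) v \<in> M" using hom_subspace_diff[OF M b a] by simp
  then have "msmult K (inverse (a - b)) (msmult K (a - b) v) \<in> M" using hom_subspaceD(4)[OF M] by blast
  then show False using \<open>a \<noteq> b\<close> vM msmult_msmult[OF X Y v] msmult_one[OF X Y v] by simp
qed

lemma maximal_hom_subspace_coordinate_exists:
  assumes X: "X \<in> Ob K" and Y: "Y \<in> Ob K" and v: "v \<in> Hom K X Y"
    and M: "hom_subspace K X Y M" and vM: "v \<notin> M"
    and max: "\<forall>M'. hom_subspace K X Y M' \<and> M \<subseteq> M' \<and> v \<notin> M' \<longrightarrow> M' = M"
    and f: "f \<in> Hom K X Y"
  shows "\<exists>a. msub K f (msmult K a v) \<in> M"
proof (cases "f \<in> M")
  case True
  then show ?thesis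
    using msmult_zero_left[OF X Y v] msub_zero_right[OF X Y f] by (intro exI[of _ 0]) simp
next
  case False
  note hom_rules = madd_in_Hom[OF X Y] msmult_in_Hom[OF X Y] subsetD[OF hom_subspaceD(1)[OF M]]
  define M' where "M' = {madd K m (msmult K b f) | m b. m \<in> M}"
  have "v \<in> M'"
    using max hom_subspace_insert_span[OF X Y M f] False unfolding M'_def by blast
  then obtain m b where m: "m \<in> M" and vmb: "v = madd K m (msmult K b f)"
    unfolding M'_def by blast
  have "b \<noteq> 0"
  proof
    assume "b = 0"
    then have "v = m" using vmb msmult_zero_left[OF X Y f] madd_mzero_right[OF X Y] m hom_rules by simp
    then show False using m vM by simp
  qed
  define m' where "m' = msmult K (inverse b) m"
  have m': "m' \<in> Hom K X Y" "msmult K (-1) m' \<in> M"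
    unfolding m'_def using m hom_rules hom_subspaceD(4)[OF M] by auto
  have "msmult K (inverse b) v = madd K m' f"
    unfolding vmb m'_def using m f \<open>b \<noteq> 0\<close>
    by (simp add: hom_rules msmult_add_right[OF X Y] msmult_msmult[OF X Y] msmult_one[OF X Y])
  then have "msub K f (msmult K (inverse b) v) = madd K f (madd K (msmult K (-1) m') (msmult K (-1) f))"
    unfolding msub_def using m'(1) f by (simp add: msmult_add_right[OF X Y])
  also have "\<dots> = msmult K (-1) m'"
    using madd_left_commute[OF X Y f _ msmult_in_Hom[OF X Y f]] madd_neg_right[OF X Y f]
      madd_mzero_right[OF X Y] m'(1) hom_rules by simp
  finally show ?thesis using m'(2) by (intro exI[of _ "inverse b"]) simp
qed

lemma separating_functional:
  assumes X: "X \<in> Ob K" and Y: "Y \<in> Ob K" and R: "hom_subspace K X Y R"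
    and v: "v \<in> Hom K X Y" and vR: "v \<notin> R"
  shows "\<exists>\<phi>\<in>hom_dual K X Y. \<phi> v = 1 \<and> (\<forall>f\<in>R. \<phi> f = 0)"
proof -
  obtain M where M: "hom_subspace K X Y M" and RM: "R \<subseteq> M" and vM: "v \<notin> M"
    and max: "\<forall>M'. hom_subspace K X Y M' \<and> M \<subseteq> M' \<and> v \<notin> M' \<longrightarrow> M' = M"
    using maximal_hom_subspace_avoiding[OF R vR] by blast
  have decomp: "\<exists>!a. msub K f (msmult K a v) \<in> M" if "f \<in> Hom K X Y" for f
    using maximal_hom_subspace_coordinate_exists[OF X Y v M vM max that]
      hom_subspace_coordinate_unique[OF X Y v M vM that] by (rule ex_ex1I)
  note hom_rules = madd_in_Hom[OF X Y] msmult_in_Hom[OF X Y]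
  \<comment> \<open>the coordinate of f along v modulo the hyperplane M\<close>
  define \<phi> where "\<phi> f = (if f \<in> Hom K X Y then THE a. msub K f (msmult K a v) \<in> M else 0)" for f
  have \<phi>_in: "msub K f (msmult K (\<phi> f) v) \<in> M" if "f \<in> Hom K X Y" for f
    using theI'[OF decomp[OF that]] that unfolding \<phi>_def by simp
  have \<phi>_eq: "\<phi> f = a" if "f \<in> Hom K X Y" and "msub K f (msmult K a v) \<in> M" for f a
    using the1_equality[OF decomp that(2)] that(1) unfolding \<phi>_def by simp
  have "\<phi> \<in> hom_dual K X Y"
    unfolding hom_dual_def
  proof (intro CollectI conjI ballI allI impI)
    fix h h' assume h: "h \<in> Hom K X Y" and h': "h' \<in> Hom K X Y"
    have "msub K (madd K h h') (msmult K (\<phi> h + \<phi> h') v) =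
          madd K (msub K h (msmult K (\<phi> h) v)) (msub K h' (msmult K (\<phi> h') v))"
      unfolding msub_def using h h' v
      by (simp add: hom_rules msmult_add_left[OF X Y] msmult_add_right[OF X Y] madd_assoc[OF X Y]
          madd_left_commute[OF X Y])
    then show "\<phi> (madd K h h') = \<phi> h + \<phi> h'"
      using \<phi>_eq hom_subspaceD(3)[OF M \<phi>_in[OF h] \<phi>_in[OF h']] h h' hom_rules by simp
  next
    fix c h assume h: "h \<in> Hom K X Y"
    have "msub K (msmult K c h) (msmult K (c * \<phi> h) v) = msmult K c (msub K h (msmult K (\<phi> h) v))"
      unfolding msub_def using h v by (simp add: hom_rules msmult_add_right[OF X Y] msmult_msmult[OF X Y] mult_ac)
    then show "\<phi> (msmult K c h) = c * \<phi> h"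
      using \<phi>_eq hom_subspaceD(4)[OF M \<phi>_in[OF h]] h hom_rules by simp
  next
    fix h assume "h \<notin> Hom K X Y"
    then show "\<phi> h = 0" unfolding \<phi>_def by simp
  qed
  moreover have "\<phi> v = 1"
    using \<phi>_eq[OF v] msub_self[OF X Y v] msmult_one[OF X Y v] hom_subspaceD(2)[OF M] by simp
  moreover have "\<phi> f = 0" if "f \<in> R" for f
  proof -
    have f: "f \<in> Hom K X Y" using that RM hom_subspaceD(1)[OF M] by blast
    show ?thesis
      using \<phi>_eq[OF f] that RM msmult_zero_left[OF X Y v] msub_zero_right[OF X Y f] by auto
  qed
  ultimately show ?thesis by blast
qed

lemma nonunits_hom_subspace:
  assumes C: "C \<in> Ob K" and loc: "local_endring K C"
  shows "hom_subspace K C C {f \<in> Hom K C C. \<not> iso_endo K C f}"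
  unfolding hom_subspace_def
proof (intro conjI ballI allI subsetI)
  show "f \<in> Hom K C C" if "f \<in> {f \<in> Hom K C C. \<not> iso_endo K C f}" for f
    using that by blast
  have "\<not> iso_endo K C (mzero K C C)"
  proof
    assume "iso_endo K C (mzero K C C)"
    then obtain g where "g \<in> Hom K C C" and "cmp K g (mzero K C C) = idm K C"
      unfolding iso_endo_def by blast
    then show False using cmp_zero_right[OF C C C] loc unfolding local_endring_def by simp
  qed
  then show "mzero K C C \<in> {f \<in> Hom K C C. \<not> iso_endo K C f}" using mzero_in_Hom[OF C C] by blast
  show "madd K f g \<in> {f \<in> Hom K C C. \<not> iso_endo K C f}"
    if "f \<in> {f \<in> Hom K C C. \<not> iso_endo K C f}" and "g \<in> {f \<in> Hom K C C. \<not> iso_endo K C f}" for f g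
    using that loc madd_in_Hom[OF C C] unfolding local_endring_def by blast
  fix a f assume f: "f \<in> {f \<in> Hom K C C. \<not> iso_endo K C f}"
  show "msmult K a f \<in> {f \<in> Hom K C C. \<not> iso_endo K C f}"
  proof (cases "a = 0")
    case True
    then show ?thesis using f msmult_zero_left[OF C C] \<open>\<not> iso_endo K C (mzero K C C)\<close> mzero_in_Hom[OF C C]
      by auto
  next
    case False
    have "\<not> iso_endo K C (msmult K a f)"
    proof
      assume "iso_endo K C (msmult K a f)"
      then obtain g where g: "g \<in> Hom K C C" "cmp K g (msmult K a f) = idm K C"
        "cmp K (msmult K a f) g = idm K C"
        unfolding iso_endo_def by blast
      have "cmp K (msmult K a g) f = idm K C" and "cmp K f (msmult K a g) = idm K C"
        using g f cmp_smult_left[OF C C C] cmp_smult_right[OF C C C] by auto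
      then have "iso_endo K C f" using f g(1) msmult_in_Hom[OF C C] unfolding iso_endo_def by blast
      then show False using f by blast
    qed
    then show ?thesis using f msmult_in_Hom[OF C C] by blast
  qed
qed

lemma hom_dual_map_vanishes_if_not_split_epi:
  assumes C: "C \<in> Ob K" and Y: "Y \<in> Ob K" and h: "h \<in> Hom K Y C" and ns: "\<not> split_epi K Y C h"
    and \<phi>: "\<And>f. \<lbrakk>f \<in> Hom K C C; \<not> iso_endo K C f\<rbrakk> \<Longrightarrow> \<phi> f = 0"
  shows "hom_dual_map K C Y h \<phi> = (\<lambda>_. 0)"
proof
  fix \<psi>
  show "hom_dual_map K C Y h \<phi> \<psi> = 0"
  proof (cases "\<psi> \<in> Hom K C Y")
    case True
    have "\<not> iso_endo K C (cmp K h \<psi>)"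
    proof
      assume "iso_endo K C (cmp K h \<psi>)"
      then obtain s where s: "s \<in> Hom K C C" "cmp K (cmp K h \<psi>) s = idm K C"
        unfolding iso_endo_def by blast
      then have "cmp K h (cmp K \<psi> s) = idm K C" using cmp_assoc[OF C C Y C s(1) True h] by simp
      then show False using ns h cmp_in_Hom[OF C C Y s(1) True] unfolding split_epi_def by blast
    qed
    then show ?thesis
      unfolding hom_dual_map_def using True \<phi> cmp_in_Hom[OF C Y C True h] by simp
  qed (simp add: hom_dual_map_def)
qed

lemma cmp_image_hom_subspace:
  assumes X: "X \<in> Ob K" and U: "U \<in> Ob K" and V: "V \<in> Ob K" and D: "D \<in> Hom K U V"
  shows "hom_subspace K X V {cmp K D g | g. g \<in> Hom K X U}"
  unfolding hom_subspace_def
proof (intro conjI ballI allI subsetI)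
  show "x \<in> Hom K X V" if "x \<in> {cmp K D g | g. g \<in> Hom K X U}" for x
    using that cmp_in_Hom[OF X U V _ D] by blast
  show "mzero K X V \<in> {cmp K D g | g. g \<in> Hom K X U}"
    using cmp_zero_right[OF X U V D] mzero_in_Hom[OF X U] by (intro CollectI exI[of _ "mzero K X U"]) simp
next
  fix x y assume "x \<in> {cmp K D g | g. g \<in> Hom K X U}" "y \<in> {cmp K D g | g. g \<in> Hom K X U}"
  then obtain g g' where g: "g \<in> Hom K X U" "g' \<in> Hom K X U" and xy: "x = cmp K D g" "y = cmp K D g'"
    by blast
  then have "madd K x y = cmp K D (madd K g g')" using cmp_add_right[OF X U V g D] by simp
  then show "madd K x y \<in> {cmp K D g | g. g \<in> Hom K X U}" using madd_in_Hom[OF X U g] by blast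
next
  fix a x assume "x \<in> {cmp K D g | g. g \<in> Hom K X U}"
  then obtain g where g: "g \<in> Hom K X U" and x: "x = cmp K D g" by blast
  then have "msmult K a x = cmp K D (msmult K a g)" using cmp_smult_right[OF X U V g D] by simp
  then show "msmult K a x \<in> {cmp K D g | g. g \<in> Hom K X U}" using msmult_in_Hom[OF X U g] by blast
qed

end

section \<open>Biproducts and pullbacks\<close>

definition is_biproduct ::
  "('o, 'm, 'k::field) kcat \<Rightarrow> 'o \<Rightarrow> 'o \<Rightarrow> 'o \<Rightarrow> 'm \<Rightarrow> 'm \<Rightarrow> 'm \<Rightarrow> 'm \<Rightarrow> bool" where
  "is_biproduct K X Y P i1 i2 p1 p2 \<longleftrightarrow> P \<in> Ob K \<and>
     i1 \<in> Hom K X P \<and> i2 \<in> Hom K Y P \<and> p1 \<in> Hom K P X \<and> p2 \<in> Hom K P Y \<and>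
     cmp K p1 i1 = idm K X \<and> cmp K p2 i2 = idm K Y \<and>
     cmp K p1 i2 = mzero K Y X \<and> cmp K p2 i1 = mzero K X Y \<and>
     madd K (cmp K i1 p1) (cmp K i2 p2) = idm K P"

definition is_pullback ::
  "('o, 'm, 'k) kcat \<Rightarrow> 'o \<Rightarrow> 'o \<Rightarrow> 'o \<Rightarrow> 'm \<Rightarrow> 'm \<Rightarrow> 'o \<Rightarrow> 'm \<Rightarrow> 'm \<Rightarrow> bool" where
  "is_pullback K X C Z p e B a g \<longleftrightarrow> B \<in> Ob K \<and> a \<in> Hom K B X \<and> g \<in> Hom K B C \<and>
     cmp K p a = cmp K e g \<and>
     (\<forall>Y\<in>Ob K. \<forall>x\<in>Hom K Y X. \<forall>y\<in>Hom K Y C. cmp K p x = cmp K e y \<longrightarrow>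
        (\<exists>u\<in>Hom K Y B. cmp K a u = x \<and> cmp K g u = y)) \<and>
     (\<forall>Y\<in>Ob K. \<forall>u\<in>Hom K Y B. \<forall>u'\<in>Hom K Y B.
        cmp K a u = cmp K a u' \<longrightarrow> cmp K g u = cmp K g u' \<longrightarrow> u = u')"

context klinear_cat
begin

lemma biproduct_decompose:
  assumes b: "is_biproduct K X Y P i1 i2 p1 p2" and X: "X \<in> Ob K" and Y: "Y \<in> Ob K"
    and W: "W \<in> Ob K" and v: "v \<in> Hom K W P"
  shows "v = madd K (cmp K i1 (cmp K p1 v)) (cmp K i2 (cmp K p2 v))"
proof -
  have P: "P \<in> Ob K" and i1: "i1 \<in> Hom K X P" and i2: "i2 \<in> Hom K Y P"
    and p1: "p1 \<in> Hom K P X" and p2: "p2 \<in> Hom K P Y"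
    using b unfolding is_biproduct_def by auto
  have "v = cmp K (madd K (cmp K i1 p1) (cmp K i2 p2)) v"
    using b cmp_idm_left[OF W P v] unfolding is_biproduct_def by simp
  also have "\<dots> = madd K (cmp K i1 (cmp K p1 v)) (cmp K i2 (cmp K p2 v))"
    using cmp_add_left[OF W P P v cmp_in_Hom[OF P X P p1 i1] cmp_in_Hom[OF P Y P p2 i2]]
      cmp_assoc[OF W P X P v p1 i1] cmp_assoc[OF W P Y P v p2 i2] by simp
  finally show ?thesis .
qed

lemma biproduct_proj_pair:
  assumes b: "is_biproduct K X Y P i1 i2 p1 p2" and X: "X \<in> Ob K" and Y: "Y \<in> Ob K"
    and W: "W \<in> Ob K" and x: "x \<in> Hom K W X" and y: "y \<in> Hom K W Y"
  shows "cmp K p1 (madd K (cmp K i1 x) (cmp K i2 y)) = x"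
    and "cmp K p2 (madd K (cmp K i1 x) (cmp K i2 y)) = y"
proof -
  have P: "P \<in> Ob K" and i1: "i1 \<in> Hom K X P" and i2: "i2 \<in> Hom K Y P"
    and p1: "p1 \<in> Hom K P X" and p2: "p2 \<in> Hom K P Y"
    using b unfolding is_biproduct_def by auto
  have i1x: "cmp K i1 x \<in> Hom K W P" and i2y: "cmp K i2 y \<in> Hom K W P"
    using cmp_in_Hom[OF W X P x i1] cmp_in_Hom[OF W Y P y i2] .
  show "cmp K p1 (madd K (cmp K i1 x) (cmp K i2 y)) = x"
    using b cmp_add_right[OF W P X i1x i2y p1] cmp_assoc[OF W X P X x i1 p1, symmetric]
      cmp_assoc[OF W Y P X y i2 p1, symmetric] cmp_idm_left[OF W X x] cmp_zero_left[OF W Y X y]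
      madd_mzero_right[OF W X x]
    unfolding is_biproduct_def by simp
  show "cmp K p2 (madd K (cmp K i1 x) (cmp K i2 y)) = y"
    using b cmp_add_right[OF W P Y i1x i2y p2] cmp_assoc[OF W X P Y x i1 p2, symmetric]
      cmp_assoc[OF W Y P Y y i2 p2, symmetric] cmp_idm_left[OF W Y y] cmp_zero_left[OF W X Y x]
      madd_mzero_left[OF W Y y]
    unfolding is_biproduct_def by simp
qed

lemma cmp_biproduct_difference:
  assumes b: "is_biproduct K X C P i1 i2 p1 p2"
    and X: "X \<in> Ob K" and C: "C \<in> Ob K" and Z: "Z \<in> Ob K"
    and p: "p \<in> Hom K X Z" and e: "e \<in> Hom K C Z" and W: "W \<in> Ob K" and v: "v \<in> Hom K W P"
  shows "cmp K (msub K (cmp K p p1) (cmp K e p2)) v = msub K (cmp K p (cmp K p1 v)) (cmp K e (cmp K p2 v))"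
proof -
  have P: "P \<in> Ob K" and p1: "p1 \<in> Hom K P X" and p2: "p2 \<in> Hom K P C"
    using b unfolding is_biproduct_def by auto
  show ?thesis
    using cmp_msub_left[OF W P Z v cmp_in_Hom[OF P X Z p1 p] cmp_in_Hom[OF P C Z p2 e]]
      cmp_assoc[OF W P X Z v p1 p] cmp_assoc[OF W P C Z v p2 e] by simp
qed

lemma biproduct_difference_epi:
  assumes b: "is_biproduct K X C P i1 i2 p1 p2"
    and X: "X \<in> Ob K" and C: "C \<in> Ob K" and Z: "Z \<in> Ob K"
    and p: "epi K X Z p" and e: "e \<in> Hom K C Z"
  shows "cmp K (msub K (cmp K p p1) (cmp K e p2)) i1 = p" and "epi K P Z (msub K (cmp K p p1) (cmp K e p2))"
proof -
  define \<sigma> where "\<sigma> = msub K (cmp K p p1) (cmp K e p2)"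
  have P: "P \<in> Ob K" and i1: "i1 \<in> Hom K X P" and p1: "p1 \<in> Hom K P X" and p2: "p2 \<in> Hom K P C"
    using b unfolding is_biproduct_def by auto
  have ph: "p \<in> Hom K X Z"
    and p_cancel: "\<And>W v w. \<lbrakk>W \<in> Ob K; v \<in> Hom K Z W; w \<in> Hom K Z W; cmp K v p = cmp K w p\<rbrakk> \<Longrightarrow> v = w"
    using p unfolding epi_def by blast+
  have \<sigma>: "\<sigma> \<in> Hom K P Z"
    unfolding \<sigma>_def using msub_in_Hom[OF P Z cmp_in_Hom[OF P X Z p1 ph] cmp_in_Hom[OF P C Z p2 e]] .
  show \<sigma>i1: "cmp K \<sigma> i1 = p"
    unfolding \<sigma>_def
    using b cmp_biproduct_difference[OF b X C Z ph e X i1] cmp_idm_right[OF X Z ph]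
      cmp_zero_right[OF X C Z e] msub_zero_right[OF X Z ph]
    unfolding is_biproduct_def by simp
  show "epi K P Z \<sigma>"
    unfolding epi_def
  proof (intro conjI ballI impI \<sigma>)
    fix W v w assume W: "W \<in> Ob K" and v: "v \<in> Hom K Z W" and w: "w \<in> Hom K Z W"
      and "cmp K v \<sigma> = cmp K w \<sigma>"
    then have "cmp K v p = cmp K w p"
      using \<sigma>i1 cmp_assoc[OF X P Z W i1 \<sigma> v] cmp_assoc[OF X P Z W i1 \<sigma> w] by metis
    then show "v = w" using p_cancel[OF W v w] by blast
  qed
qed

lemma kernel_of_difference_is_pullback:
  assumes b: "is_biproduct K X C P i1 i2 p1 p2"
    and X: "X \<in> Ob K" and C: "C \<in> Ob K" and Z: "Z \<in> Ob K"
    and p: "p \<in> Hom K X Z" and e: "e \<in> Hom K C Z"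
    and k: "is_kernel K B P Z k (msub K (cmp K p p1) (cmp K e p2))"
  shows "is_pullback K X C Z p e B (cmp K p1 k) (cmp K p2 k)"
proof -
  define \<sigma> where "\<sigma> = msub K (cmp K p p1) (cmp K e p2)"
  have P: "P \<in> Ob K" and p1: "p1 \<in> Hom K P X" and p2: "p2 \<in> Hom K P C"
    using b unfolding is_biproduct_def by auto
  note kd = is_kernelD[OF k[folded \<sigma>_def]]
  have B: "B \<in> Ob K" and kh: "k \<in> Hom K B P" by (fact kd(1), fact kd(2))
  have a: "cmp K p1 k \<in> Hom K B X" and g: "cmp K p2 k \<in> Hom K B C"
    using cmp_in_Hom[OF B P X kh p1] cmp_in_Hom[OF B P C kh p2] .
  have \<sigma>_comp: "cmp K \<sigma> v = msub K (cmp K p (cmp K p1 v)) (cmp K e (cmp K p2 v))"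
    if "W \<in> Ob K" and "v \<in> Hom K W P" for W v
    unfolding \<sigma>_def using cmp_biproduct_difference[OF b X C Z p e that] .
  have "cmp K p (cmp K p1 k) = cmp K e (cmp K p2 k)"
    using \<sigma>_comp[OF B kh] kd(4)
      msub_eq_zero_imp_eq[OF B Z cmp_in_Hom[OF B X Z a p] cmp_in_Hom[OF B C Z g e]] by simp
  moreover have "\<exists>u\<in>Hom K W B. cmp K (cmp K p1 k) u = x \<and> cmp K (cmp K p2 k) u = y"
    if W: "W \<in> Ob K" and x: "x \<in> Hom K W X" and y: "y \<in> Hom K W C"
      and xy: "cmp K p x = cmp K e y" for W x y
  proof -
    define w where "w = madd K (cmp K i1 x) (cmp K i2 y)"
    have w: "w \<in> Hom K W P"
      unfolding w_def using b madd_in_Hom[OF W P] cmp_in_Hom[OF W X P x] cmp_in_Hom[OF W C P y]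
      unfolding is_biproduct_def by blast
    have p1w: "cmp K p1 w = x" and p2w: "cmp K p2 w = y"
      unfolding w_def using biproduct_proj_pair[OF b X C W x y] by auto
    have "cmp K \<sigma> w = mzero K W Z"
      using \<sigma>_comp[OF W w] p1w p2w xy msub_self[OF W Z cmp_in_Hom[OF W C Z y e]] by simp
    then obtain u where u: "u \<in> Hom K W B" "cmp K k u = w"
      using kd(5)[OF W w] by blast
    then show ?thesis
      using cmp_assoc[OF W B P X u(1) kh p1] cmp_assoc[OF W B P C u(1) kh p2] p1w p2w by auto
  qed
  moreover have "u = u'"
    if W: "W \<in> Ob K" and u: "u \<in> Hom K W B" and u': "u' \<in> Hom K W B"
      and eq1: "cmp K (cmp K p1 k) u = cmp K (cmp K p1 k) u'"
      and eq2: "cmp K (cmp K p2 k) u = cmp K (cmp K p2 k) u'" for W u u'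
  proof -
    have "cmp K k u = cmp K k u'"
      using biproduct_decompose[OF b X C W cmp_in_Hom[OF W B P u kh]]
        biproduct_decompose[OF b X C W cmp_in_Hom[OF W B P u' kh]] eq1 eq2
        cmp_assoc[OF W B P X u kh p1] cmp_assoc[OF W B P C u kh p2]
        cmp_assoc[OF W B P X u' kh p1] cmp_assoc[OF W B P C u' kh p2]
      by simp
    then show ?thesis
      using kernel_is_mono[OF k P Z] W u u' unfolding mono_def by blast
  qed
  ultimately show ?thesis unfolding is_pullback_def using B a g by blast
qed

end

locale klinear_abelian_cat = klinear_cat +
  assumes abelian: "abelian K"
begin

lemma mono_is_kernel:
  "\<lbrakk>X \<in> Ob K; Y \<in> Ob K; mono K X Y f\<rbrakk> \<Longrightarrow> \<exists>Z\<in>Ob K. \<exists>g. is_kernel K X Y Z f g"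
  using abelian unfolding abelian_def by (elim conjE) blast

lemma epi_is_cokernel:
  "\<lbrakk>X \<in> Ob K; Y \<in> Ob K; epi K X Y f\<rbrakk> \<Longrightarrow> \<exists>Z\<in>Ob K. \<exists>g. is_cokernel K Z X Y f g"
  using abelian unfolding abelian_def by (elim conjE) blast

lemma biproduct_exists:
  assumes "X \<in> Ob K" and "Y \<in> Ob K"
  shows "\<exists>P i1 i2 p1 p2. is_biproduct K X Y P i1 i2 p1 p2"
  using abelian[unfolded abelian_def, THEN conjunct2, THEN conjunct1] assms
  unfolding is_biproduct_def by fast

lemma kernel_exists:
  "\<lbrakk>X \<in> Ob K; Y \<in> Ob K; f \<in> Hom K X Y\<rbrakk> \<Longrightarrow> \<exists>N k. is_kernel K N X Y k f"
  using abelian[unfolded abelian_def, THEN conjunct2, THEN conjunct2, THEN conjunct1] by blast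

lemma mono_factors_through:
  assumes m: "mono K X Y m" and c: "is_cokernel K X Y Q c m"
    and X: "X \<in> Ob K" and Y: "Y \<in> Ob K" and W: "W \<in> Ob K" and h: "h \<in> Hom K W Y"
    and ch: "cmp K c h = mzero K W Q"
  shows "\<exists>u\<in>Hom K W X. cmp K m u = h"
proof -
  obtain Z g where Z: "Z \<in> Ob K" and mk: "is_kernel K X Y Z m g"
    using mono_is_kernel[OF X Y m] by blast
  note kd = is_kernelD[OF mk] and cd = is_cokernelD[OF c]
  obtain u where u: "u \<in> Hom K Q Z" "cmp K u c = g"
    using cd(5)[OF Z kd(3,4)] by blast
  have "cmp K g h = mzero K W Z"
    using cmp_assoc[OF W Y cd(1) Z h cd(3) u(1)] u(2) ch cmp_zero_right[OF W cd(1) Z u(1)] by simp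
  then show ?thesis using kd(5)[OF W h] by blast
qed

lemma epi_factors_through:
  assumes s: "epi K P Z \<sigma>" and k: "is_kernel K B P Z k \<sigma>"
    and P: "P \<in> Ob K" and Z: "Z \<in> Ob K" and W: "W \<in> Ob K" and h: "h \<in> Hom K P W"
    and hk: "cmp K h k = mzero K B W"
  shows "\<exists>v\<in>Hom K Z W. cmp K v \<sigma> = h"
proof -
  obtain Z0 z where Z0: "Z0 \<in> Ob K" and sc: "is_cokernel K Z0 P Z \<sigma> z"
    using epi_is_cokernel[OF P Z s] by blast
  note kd = is_kernelD[OF k] and cd = is_cokernelD[OF sc]
  obtain w where w: "w \<in> Hom K Z0 B" "cmp K k w = z"
    using kd(5)[OF Z0 cd(2,4)] by blast
  have "cmp K h z = mzero K Z0 W"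
    using cmp_assoc[OF Z0 kd(1) P W w(1) kd(2) h] w(2) hk cmp_zero_left[OF Z0 kd(1) W w(1)] by simp
  then show ?thesis using cd(5)[OF W h] by blast
qed

lemma kernel_of_difference_proj_epi:
  assumes b: "is_biproduct K X C P i1 i2 p1 p2"
    and X: "X \<in> Ob K" and C: "C \<in> Ob K" and Z: "Z \<in> Ob K"
    and p: "epi K X Z p" and e: "e \<in> Hom K C Z"
    and k: "is_kernel K B P Z k (msub K (cmp K p p1) (cmp K e p2))"
  shows "epi K B C (cmp K p2 k)"
  unfolding epi_def
proof (intro conjI ballI impI)
  define \<sigma> where "\<sigma> = msub K (cmp K p p1) (cmp K e p2)"
  have P: "P \<in> Ob K" and i1: "i1 \<in> Hom K X P" and i2: "i2 \<in> Hom K C P"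
    and p1: "p1 \<in> Hom K P X" and p2: "p2 \<in> Hom K P C"
    using b unfolding is_biproduct_def by auto
  have ph: "p \<in> Hom K X Z"
    and p_cancel: "\<And>W v w. \<lbrakk>W \<in> Ob K; v \<in> Hom K Z W; w \<in> Hom K Z W; cmp K v p = cmp K w p\<rbrakk> \<Longrightarrow> v = w"
    using p unfolding epi_def by blast+
  note kd = is_kernelD[OF k[folded \<sigma>_def]]
  have B: "B \<in> Ob K" and kh: "k \<in> Hom K B P" and \<sigma>: "\<sigma> \<in> Hom K P Z" by (fact kd(1,2,3))+
  show g: "cmp K p2 k \<in> Hom K B C" using cmp_in_Hom[OF B P C kh p2] .
  have \<sigma>i1: "cmp K \<sigma> i1 = p" and \<sigma>_epi: "epi K P Z \<sigma>"
    unfolding \<sigma>_def using biproduct_difference_epi[OF b X C Z p e] by auto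
  fix W t1 t2 assume W: "W \<in> Ob K" and t1: "t1 \<in> Hom K C W" and t2: "t2 \<in> Hom K C W"
    and eq: "cmp K t1 (cmp K p2 k) = cmp K t2 (cmp K p2 k)"
  define t where "t = msub K t1 t2"
  have t: "t \<in> Hom K C W" and tp2: "cmp K t p2 \<in> Hom K P W"
    unfolding t_def using msub_in_Hom[OF C W t1 t2] cmp_in_Hom[OF P C W p2] by blast+
  have "cmp K (cmp K t p2) k = cmp K t (cmp K p2 k)" using cmp_assoc[OF B P C W kh p2 t] .
  also have "\<dots> = mzero K B W"
    unfolding t_def using cmp_msub_left[OF B C W g t1 t2] eq msub_self[OF B W cmp_in_Hom[OF B C W g t2]]
    by simp
  \<comment> \<open>t p2 kills the kernel of the epimorphism \<sigma>, so it factors through \<sigma> by a map that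
     vanishes on \<sigma> i1 = p, hence is zero\<close>
  finally obtain v where v: "v \<in> Hom K Z W" "cmp K v \<sigma> = cmp K t p2"
    using epi_factors_through[OF \<sigma>_epi k[folded \<sigma>_def] P Z W tp2] by blast
  have "cmp K v p = cmp K (cmp K t p2) i1" using \<sigma>i1 v(2) cmp_assoc[OF X P Z W i1 \<sigma> v(1)] by simp
  also have "\<dots> = mzero K X W"
    using b cmp_assoc[OF X P C W i1 p2 t] cmp_zero_right[OF X C W t] unfolding is_biproduct_def by simp
  also have "\<dots> = cmp K (mzero K Z W) p" using cmp_zero_left[OF X Z W ph] by simp
  finally have "v = mzero K Z W" using p_cancel[OF W v(1) mzero_in_Hom[OF Z W]] by blast
  then have "cmp K t p2 = mzero K P W" using v(2) cmp_zero_left[OF P Z W \<sigma>] by simp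
  then have "t = mzero K C W"
    using b cmp_assoc[OF C P C W i2 p2 t] cmp_zero_left[OF C P W i2] cmp_idm_right[OF C W t]
    unfolding is_biproduct_def by simp
  then show "t1 = t2" unfolding t_def using msub_eq_zero_imp_eq[OF C W t1 t2] by blast
qed

lemma pullback_of_epi_exists:
  assumes X: "X \<in> Ob K" and C: "C \<in> Ob K" and Z: "Z \<in> Ob K"
    and p: "epi K X Z p" and e: "e \<in> Hom K C Z"
  shows "\<exists>B a g. is_pullback K X C Z p e B a g \<and> epi K B C g"
proof -
  obtain P i1 i2 p1 p2 where b: "is_biproduct K X C P i1 i2 p1 p2"
    using biproduct_exists[OF X C] by blast
  have P: "P \<in> Ob K" and p1: "p1 \<in> Hom K P X" and p2: "p2 \<in> Hom K P C"
    using b unfolding is_biproduct_def by auto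
  have "msub K (cmp K p p1) (cmp K e p2) \<in> Hom K P Z"
    using p msub_in_Hom[OF P Z] cmp_in_Hom[OF P X Z p1] cmp_in_Hom[OF P C Z p2 e]
    unfolding epi_def by blast
  then obtain B k where k: "is_kernel K B P Z k (msub K (cmp K p p1) (cmp K e p2))"
    using kernel_exists[OF P Z] by blast
  have "p \<in> Hom K X Z" using p unfolding epi_def by blast
  then show ?thesis
    using kernel_of_difference_is_pullback[OF b X C Z _ e k] kernel_of_difference_proj_epi[OF b X C Z p e k]
    by blast
qed

lemma pullback_of_cokernel_kernel:
  assumes m: "mono K N X \<iota>" and c: "is_cokernel K N X Z \<pi> \<iota>"
    and N: "N \<in> Ob K" and X: "X \<in> Ob K" and C: "C \<in> Ob K" and Z: "Z \<in> Ob K"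
    and e: "e \<in> Hom K C Z" and pb: "is_pullback K X C Z \<pi> e B a g"
  shows "\<exists>f. is_kernel K N B C f g"
proof -
  note cd = is_cokernelD[OF c]
  have B: "B \<in> Ob K" and a: "a \<in> Hom K B X" and g: "g \<in> Hom K B C"
    and square: "cmp K \<pi> a = cmp K e g"
    and lift: "\<And>Y x y. \<lbrakk>Y \<in> Ob K; x \<in> Hom K Y X; y \<in> Hom K Y C; cmp K \<pi> x = cmp K e y\<rbrakk>
                 \<Longrightarrow> \<exists>u\<in>Hom K Y B. cmp K a u = x \<and> cmp K g u = y"
    and joint: "\<And>Y u u'. \<lbrakk>Y \<in> Ob K; u \<in> Hom K Y B; u' \<in> Hom K Y B;
                  cmp K a u = cmp K a u'; cmp K g u = cmp K g u'\<rbrakk> \<Longrightarrow> u = u'"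
    using pb unfolding is_pullback_def by blast+
  have \<iota>: "\<iota> \<in> Hom K N X"
    and \<iota>_cancel: "\<And>W u v. \<lbrakk>W \<in> Ob K; u \<in> Hom K W N; v \<in> Hom K W N; cmp K \<iota> u = cmp K \<iota> v\<rbrakk> \<Longrightarrow> u = v"
    using m unfolding mono_def by blast+
  have "cmp K \<pi> \<iota> = cmp K e (mzero K N C)" using cd(4) cmp_zero_right[OF N C Z e] by simp
  then obtain f where f: "f \<in> Hom K N B" and af: "cmp K a f = \<iota>" and gf: "cmp K g f = mzero K N C"
    using lift[OF N \<iota> mzero_in_Hom[OF N C]] by blast
  have "is_kernel K N B C f g"
    unfolding is_kernel_def
  proof (intro conjI ballI impI N f g gf)
    fix W h assume W: "W \<in> Ob K" and h: "h \<in> Hom K W B" and gh: "cmp K g h = mzero K W C"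
    have ah: "cmp K a h \<in> Hom K W X" using cmp_in_Hom[OF W B X h a] .
    have "cmp K \<pi> (cmp K a h) = cmp K e (cmp K g h)"
      using cmp_assoc[OF W B X Z h a cd(3)] cmp_assoc[OF W B C Z h g e] square by simp
    also have "\<dots> = mzero K W Z" using gh cmp_zero_right[OF W C Z e] by simp
    finally obtain v where v: "v \<in> Hom K W N" "cmp K \<iota> v = cmp K a h"
      using mono_factors_through[OF m c N X W ah] by blast
    have fv: "cmp K f v \<in> Hom K W B" using cmp_in_Hom[OF W N B v(1) f] .
    have "cmp K a (cmp K f v) = cmp K a h" using cmp_assoc[OF W N B X v(1) f a] af v(2) by simp
    moreover have "cmp K g (cmp K f v) = cmp K g h"
      using cmp_assoc[OF W N B C v(1) f g] gf gh cmp_zero_left[OF W N C v(1)] by simp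
    ultimately have fvh: "cmp K f v = h" using joint[OF W fv h] by blast
    show "\<exists>!u. u \<in> Hom K W N \<and> cmp K f u = h"
    proof (rule ex1I[of _ v])
      show "v \<in> Hom K W N \<and> cmp K f v = h" using v fvh by blast
      fix u assume u: "u \<in> Hom K W N \<and> cmp K f u = h"
      then have "cmp K \<iota> u = cmp K a h" using af cmp_assoc[OF W N B X _ f a, of u] by simp
      then show "u = v" using \<iota>_cancel[OF W _ v(1)] u v(2) by simp
    qed
  qed
  then show ?thesis by blast
qed

end

section \<open>Injective resolutions and Ext\<close>

locale klinear_resolution = klinear_abelian_cat K for K :: "('o, 'm, 'k::field) kcat" +
  fixes A :: 'o and S I :: "nat \<Rightarrow> 'o" and \<iota> \<pi> :: "nat \<Rightarrow> 'm"
  assumes resolution: "inj_resolution K A S I \<iota> \<pi>"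
begin

lemma S_in_Ob: "S n \<in> Ob K"
  and I_in_Ob: "I n \<in> Ob K"
  and iota_mono: "mono K (S n) (I n) (\<iota> n)"
  and pi_cokernel: "is_cokernel K (S n) (I n) (S (Suc n)) (\<pi> n) (\<iota> n)"
  using resolution unfolding inj_resolution_def injective_obj_def by blast+

lemma iota_in_Hom: "\<iota> n \<in> Hom K (S n) (I n)"
  using iota_mono unfolding mono_def by blast

lemma pi_in_Hom: "\<pi> n \<in> Hom K (I n) (S (Suc n))"
  using is_cokernelD(3)[OF pi_cokernel] .

lemma iota_cancel:
  "\<lbrakk>W \<in> Ob K; u \<in> Hom K W (S n); v \<in> Hom K W (S n); cmp K (\<iota> n) u = cmp K (\<iota> n) v\<rbrakk> \<Longrightarrow> u = v"
  using iota_mono unfolding mono_def by blast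

lemma res_diff_in_Hom: "res_diff K \<iota> \<pi> n \<in> Hom K (I n) (I (Suc n))"
  unfolding res_diff_def using cmp_in_Hom[OF I_in_Ob S_in_Ob I_in_Ob pi_in_Hom iota_in_Hom] .

lemma ext_cocycles_cmp:
  assumes Y: "Y \<in> Ob K" and Z: "Z \<in> Ob K" and e: "e \<in> ext_cocycles K I \<iota> \<pi> n Z" and h: "h \<in> Hom K Y Z"
  shows "cmp K e h \<in> ext_cocycles K I \<iota> \<pi> n Y"
proof -
  have e_Hom: "e \<in> Hom K Z (I n)" and De: "cmp K (res_diff K \<iota> \<pi> n) e = mzero K Z (I (Suc n))"
    using e unfolding ext_cocycles_def by blast+
  have "cmp K (res_diff K \<iota> \<pi> n) (cmp K e h) = mzero K Y (I (Suc n))"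
    using cmp_assoc[OF Y Z I_in_Ob I_in_Ob h e_Hom res_diff_in_Hom] De
      cmp_zero_left[OF Y Z I_in_Ob h] by simp
  then show ?thesis
    unfolding ext_cocycles_def using cmp_in_Hom[OF Y Z I_in_Ob h e_Hom] by blast
qed

lemma cocycle_factors_through_syzygy:
  assumes W: "W \<in> Ob K" and e: "e \<in> ext_cocycles K I \<iota> \<pi> n W"
  shows "\<exists>e'\<in>Hom K W (S n). cmp K (\<iota> n) e' = e"
proof -
  have e_Hom: "e \<in> Hom K W (I n)" and De: "cmp K (res_diff K \<iota> \<pi> n) e = mzero K W (I (Suc n))"
    using e unfolding ext_cocycles_def by blast+
  have "cmp K (\<iota> (Suc n)) (cmp K (\<pi> n) e) = cmp K (\<iota> (Suc n)) (mzero K W (S (Suc n)))"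
    using De cmp_assoc[OF W I_in_Ob S_in_Ob I_in_Ob e_Hom pi_in_Hom iota_in_Hom]
      cmp_zero_right[OF W S_in_Ob I_in_Ob iota_in_Hom]
    unfolding res_diff_def by simp
  then have "cmp K (\<pi> n) e = mzero K W (S (Suc n))"
    by (rule iota_cancel[OF W cmp_in_Hom[OF W I_in_Ob S_in_Ob e_Hom pi_in_Hom] mzero_in_Hom[OF W S_in_Ob]])
  then show ?thesis
    using mono_factors_through[OF iota_mono pi_cokernel S_in_Ob I_in_Ob W e_Hom] by blast
qed

text \<open>Stated in positive degree: in degree 0 the coboundaries of the definition land in
  the wrong Hom set.\<close>

lemma ext_class_eq_zero_iff:
  assumes X: "X \<in> Ob K" and e: "e \<in> ext_cocycles K I \<iota> \<pi> (Suc n) X"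
  shows "ext_class K I \<iota> \<pi> (Suc n) X e = ext_class K I \<iota> \<pi> (Suc n) X (mzero K X (I (Suc n)))
     \<longleftrightarrow> e \<in> ext_coboundaries K I \<iota> \<pi> (Suc n) X"
proof -
  have cob: "hom_subspace K X (I (Suc n)) (ext_coboundaries K I \<iota> \<pi> (Suc n) X)"
    unfolding ext_coboundaries_def using cmp_image_hom_subspace[OF X I_in_Ob I_in_Ob res_diff_in_Hom]
    by simp
  have e_Hom: "e \<in> Hom K X (I (Suc n))" using e unfolding ext_cocycles_def by blast
  have Hom_of: "f \<in> Hom K X (I (Suc n))" if "f \<in> ext_cocycles K I \<iota> \<pi> (Suc n) X" for f
    using that unfolding ext_cocycles_def by blast
  show ?thesis
  proof
    assume "ext_class K I \<iota> \<pi> (Suc n) X e = ext_class K I \<iota> \<pi> (Suc n) X (mzero K X (I (Suc n)))"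
    moreover have "e \<in> ext_class K I \<iota> \<pi> (Suc n) X e"
      unfolding ext_class_def using e msub_self[OF X I_in_Ob e_Hom] hom_subspaceD(2)[OF cob] by simp
    ultimately show "e \<in> ext_coboundaries K I \<iota> \<pi> (Suc n) X"
      unfolding ext_class_def using msub_zero_right[OF X I_in_Ob e_Hom] by auto
  next
    assume e_cob: "e \<in> ext_coboundaries K I \<iota> \<pi> (Suc n) X"
    have "msub K f e \<in> ext_coboundaries K I \<iota> \<pi> (Suc n) X
          \<longleftrightarrow> msub K f (mzero K X (I (Suc n))) \<in> ext_coboundaries K I \<iota> \<pi> (Suc n) X"
      if f: "f \<in> ext_cocycles K I \<iota> \<pi> (Suc n) X" for f
      using hom_subspaceD(3)[OF cob _ e_cob] hom_subspace_diff[OF cob _ e_cob]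
        msub_madd_cancel[OF X I_in_Ob Hom_of[OF f] e_Hom] msub_zero_right[OF X I_in_Ob Hom_of[OF f]]
      by metis
    then show "ext_class K I \<iota> \<pi> (Suc n) X e = ext_class K I \<iota> \<pi> (Suc n) X (mzero K X (I (Suc n)))"
      unfolding ext_class_def by blast
  qed
qed

lemma factors_through_pullback_iff_coboundary:
  assumes C: "C \<in> Ob K" and e': "e' \<in> Hom K C (S (Suc n))"
    and pb: "is_pullback K (I n) C (S (Suc n)) (\<pi> n) e' B a g"
    and Y: "Y \<in> Ob K" and h: "h \<in> Hom K Y C"
  shows "(\<exists>u\<in>Hom K Y B. cmp K g u = h)
     \<longleftrightarrow> cmp K (cmp K (\<iota> (Suc n)) e') h \<in> ext_coboundaries K I \<iota> \<pi> (Suc n) Y"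
proof -
  have B: "B \<in> Ob K" and a: "a \<in> Hom K B (I n)" and g: "g \<in> Hom K B C"
    and square: "cmp K (\<pi> n) a = cmp K e' g"
    and lift: "\<And>x. \<lbrakk>x \<in> Hom K Y (I n); cmp K (\<pi> n) x = cmp K e' h\<rbrakk>
                 \<Longrightarrow> \<exists>u\<in>Hom K Y B. cmp K a u = x \<and> cmp K g u = h"
    using pb Y h unfolding is_pullback_def by blast+
  have e'h: "cmp K e' h \<in> Hom K Y (S (Suc n))" using cmp_in_Hom[OF Y C S_in_Ob h e'] .
  have coboundary_eq: "cmp K (res_diff K \<iota> \<pi> n) x = cmp K (\<iota> (Suc n)) (cmp K (\<pi> n) x)"
    if "x \<in> Hom K Y (I n)" for x
    unfolding res_diff_def using cmp_assoc[OF Y I_in_Ob S_in_Ob I_in_Ob that pi_in_Hom iota_in_Hom] .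
  have ie'h: "cmp K (cmp K (\<iota> (Suc n)) e') h = cmp K (\<iota> (Suc n)) (cmp K e' h)"
    using cmp_assoc[OF Y C S_in_Ob I_in_Ob h e' iota_in_Hom] .
  show ?thesis
  proof
    assume "\<exists>u\<in>Hom K Y B. cmp K g u = h"
    then obtain u where u: "u \<in> Hom K Y B" "cmp K g u = h" by blast
    have au: "cmp K a u \<in> Hom K Y (I n)" using cmp_in_Hom[OF Y B I_in_Ob u(1) a] .
    have "cmp K e' h = cmp K (\<pi> n) (cmp K a u)"
      using u(2) square cmp_assoc[OF Y B C S_in_Ob u(1) g e'] cmp_assoc[OF Y B I_in_Ob S_in_Ob u(1) a pi_in_Hom]
      by simp
    then have "cmp K (cmp K (\<iota> (Suc n)) e') h = cmp K (res_diff K \<iota> \<pi> n) (cmp K a u)"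
      using ie'h coboundary_eq[OF au] by simp
    then show "cmp K (cmp K (\<iota> (Suc n)) e') h \<in> ext_coboundaries K I \<iota> \<pi> (Suc n) Y"
      unfolding ext_coboundaries_def using au by auto
  next
    assume "cmp K (cmp K (\<iota> (Suc n)) e') h \<in> ext_coboundaries K I \<iota> \<pi> (Suc n) Y"
    then obtain x where x: "x \<in> Hom K Y (I n)"
      and "cmp K (\<iota> (Suc n)) (cmp K e' h) = cmp K (\<iota> (Suc n)) (cmp K (\<pi> n) x)"
      unfolding ext_coboundaries_def using ie'h coboundary_eq by auto
    then have "cmp K (\<pi> n) x = cmp K e' h"
      using iota_cancel[OF Y e'h cmp_in_Hom[OF Y I_in_Ob S_in_Ob x pi_in_Hom]] by simp
    then show "\<exists>u\<in>Hom K Y B. cmp K g u = h" using lift[OF x] by blast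
  qed
qed

end

section \<open>The almost split sequence\<close>

locale klinear_dual_ext = klinear_resolution K A S I \<iota> \<pi>
  for K :: "('o, 'm, 'k::field) kcat" and A S I \<iota> \<pi> +
  fixes C :: 'o and d :: nat and \<eta> :: "'o \<Rightarrow> ('m \<Rightarrow> 'k) \<Rightarrow> 'm set"
  assumes C_in_Ob: "C \<in> Ob K" and degree_pos: "1 \<le> d"
    and dual_ext: "nat_equiv_dual_ext K C I \<iota> \<pi> d \<eta>"
begin

lemma eta_bij: "X \<in> Ob K \<Longrightarrow> bij_betw (\<eta> X) (hom_dual K C X) (Ext K I \<iota> \<pi> d X)"
  using dual_ext unfolding nat_equiv_dual_ext_def by blast

lemma eta_linear:
  "\<lbrakk>X \<in> Ob K; \<phi> \<in> hom_dual K C X; \<psi> \<in> hom_dual K C X;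
    f \<in> ext_cocycles K I \<iota> \<pi> d X; g \<in> ext_cocycles K I \<iota> \<pi> d X;
    \<eta> X \<phi> = ext_class K I \<iota> \<pi> d X f; \<eta> X \<psi> = ext_class K I \<iota> \<pi> d X g\<rbrakk>
   \<Longrightarrow> \<eta> X (\<lambda>h. a * \<phi> h + b * \<psi> h) = ext_class K I \<iota> \<pi> d X (madd K (msmult K a f) (msmult K b g))"
  using dual_ext unfolding nat_equiv_dual_ext_def by blast

lemma eta_natural:
  "\<lbrakk>X \<in> Ob K; Y \<in> Ob K; u \<in> Hom K X Y; \<phi> \<in> hom_dual K C Y; f \<in> ext_cocycles K I \<iota> \<pi> d Y;
    \<eta> Y \<phi> = ext_class K I \<iota> \<pi> d Y f\<rbrakk>
   \<Longrightarrow> \<eta> X (hom_dual_map K C X u \<phi>) = ext_class K I \<iota> \<pi> d X (cmp K f u)"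
  using dual_ext unfolding nat_equiv_dual_ext_def by blast

lemma eta_class:
  assumes "X \<in> Ob K" and "\<phi> \<in> hom_dual K C X"
  obtains f where "f \<in> ext_cocycles K I \<iota> \<pi> d X" and "\<eta> X \<phi> = ext_class K I \<iota> \<pi> d X f"
  using eta_bij[OF assms(1)] assms(2) unfolding bij_betw_def Ext_def by blast

lemma zero_in_hom_dual: "(\<lambda>_. 0) \<in> hom_dual K C X"
  unfolding hom_dual_def by simp

lemma eta_zero:
  assumes X: "X \<in> Ob K"
  shows "\<eta> X (\<lambda>_. 0) = ext_class K I \<iota> \<pi> d X (mzero K X (I d))"
proof -
  obtain f where f: "f \<in> ext_cocycles K I \<iota> \<pi> d X" and \<eta>f: "\<eta> X (\<lambda>_. 0) = ext_class K I \<iota> \<pi> d X f"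
    using eta_class[OF X zero_in_hom_dual] .
  have f_Hom: "f \<in> Hom K X (I d)" using f unfolding ext_cocycles_def by blast
  have "\<eta> X (\<lambda>h. 0 * 0 + 0 * 0) = ext_class K I \<iota> \<pi> d X (madd K (msmult K 0 f) (msmult K 0 f))"
    using eta_linear[OF X zero_in_hom_dual zero_in_hom_dual f f \<eta>f \<eta>f] .
  then show ?thesis
    using msmult_zero_left[OF X I_in_Ob f_Hom] madd_mzero_right[OF X I_in_Ob mzero_in_Hom[OF X I_in_Ob]] by simp
qed

lemma eta_eq_zero_iff_coboundary:
  assumes X: "X \<in> Ob K" and \<phi>: "\<phi> \<in> hom_dual K C X" and e: "e \<in> ext_cocycles K I \<iota> \<pi> d X"
    and \<eta>e: "\<eta> X \<phi> = ext_class K I \<iota> \<pi> d X e"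
  shows "\<phi> = (\<lambda>_. 0) \<longleftrightarrow> e \<in> ext_coboundaries K I \<iota> \<pi> d X"
proof -
  obtain n where d: "d = Suc n" using degree_pos by (cases d) auto
  have "\<phi> = (\<lambda>_. 0) \<longleftrightarrow> \<eta> X \<phi> = \<eta> X (\<lambda>_. 0)"
    using eta_bij[OF X] \<phi> zero_in_hom_dual unfolding bij_betw_def inj_on_def by blast
  also have "\<dots> \<longleftrightarrow> e \<in> ext_coboundaries K I \<iota> \<pi> d X"
    using \<eta>e eta_zero[OF X] ext_class_eq_zero_iff[OF X e[unfolded d]] unfolding d by simp
  finally show ?thesis .
qed

lemma pullback_of_dual_class_right_almost_split:
  assumes d: "d = Suc n"
    and \<phi>: "\<phi> \<in> hom_dual K C C" "\<phi> (idm K C) \<noteq> 0"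
    and \<phi>_nonunit: "\<And>f. \<lbrakk>f \<in> Hom K C C; \<not> iso_endo K C f\<rbrakk> \<Longrightarrow> \<phi> f = 0"
    and e: "e \<in> ext_cocycles K I \<iota> \<pi> d C" and \<eta>e: "\<eta> C \<phi> = ext_class K I \<iota> \<pi> d C e"
    and e': "e' \<in> Hom K C (S d)" and e'e: "cmp K (\<iota> d) e' = e"
    and pb: "is_pullback K (I n) C (S d) (\<pi> n) e' B a g"
  shows "right_almost_split K B C g"
proof -
  note C = C_in_Ob
  have lifts_iff: "(\<exists>u\<in>Hom K Y B. cmp K g u = h) \<longleftrightarrow> cmp K e h \<in> ext_coboundaries K I \<iota> \<pi> d Y"
    if "Y \<in> Ob K" and "h \<in> Hom K Y C" for Y h
    using factors_through_pullback_iff_coboundary[OF C e'[unfolded d] pb[unfolded d] that] e'e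
    unfolding d by simp
  have not_split: "\<not> split_epi K B C g"
  proof
    assume "split_epi K B C g"
    then have "cmp K e (idm K C) \<in> ext_coboundaries K I \<iota> \<pi> d C"
      using lifts_iff[OF C idm_in_Hom[OF C]] unfolding split_epi_def by blast
    then have "\<phi> = (\<lambda>_. 0)"
      using eta_eq_zero_iff_coboundary[OF C \<phi>(1) e \<eta>e] cmp_idm_right[OF C I_in_Ob] e
      unfolding ext_cocycles_def by auto
    then show False using \<phi>(2) by simp
  qed
  have "\<exists>u\<in>Hom K Y B. cmp K g u = h"
    if Y: "Y \<in> Ob K" and h: "h \<in> Hom K Y C" and ns: "\<not> split_epi K Y C h" for Y h
  proof -
    have "\<eta> Y (\<lambda>_. 0) = ext_class K I \<iota> \<pi> d Y (cmp K e h)"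
      using eta_natural[OF Y C h \<phi>(1) e \<eta>e]
        hom_dual_map_vanishes_if_not_split_epi[OF C Y h ns \<phi>_nonunit] by simp
    then have "cmp K e h \<in> ext_coboundaries K I \<iota> \<pi> d Y"
      using eta_eq_zero_iff_coboundary[OF Y zero_in_hom_dual ext_cocycles_cmp[OF Y C e h]] by simp
    then show ?thesis using lifts_iff[OF Y h] by blast
  qed
  then show ?thesis
    unfolding right_almost_split_def using pb not_split unfolding is_pullback_def by blast
qed

lemma almost_split_sequence_exists:
  assumes loc: "local_endring K C"
  shows "\<exists>B f g. B \<in> Ob K \<and> f \<in> Hom K (S (d - 1)) B \<and> g \<in> Hom K B C \<and>
           is_kernel K (S (d - 1)) B C f g \<and> epi K B C g \<and> right_almost_split K B C g"
proof -
  obtain n where d: "d = Suc n" using degree_pos by (cases d) auto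
  note C = C_in_Ob
  have "idm K C \<notin> {f \<in> Hom K C C. \<not> iso_endo K C f}"
    using idm_in_Hom[OF C] cmp_idm_left[OF C C] unfolding iso_endo_def by blast
  then obtain \<phi> where \<phi>: "\<phi> \<in> hom_dual K C C" "\<phi> (idm K C) = 1"
    and \<phi>_nonunit: "\<And>f. \<lbrakk>f \<in> Hom K C C; \<not> iso_endo K C f\<rbrakk> \<Longrightarrow> \<phi> f = 0"
    using separating_functional[OF C C nonunits_hom_subspace[OF C loc] idm_in_Hom[OF C]] by blast
  obtain e where e: "e \<in> ext_cocycles K I \<iota> \<pi> d C" and \<eta>e: "\<eta> C \<phi> = ext_class K I \<iota> \<pi> d C e"
    using eta_class[OF C \<phi>(1)] .
  obtain e' where e': "e' \<in> Hom K C (S d)" and e'e: "cmp K (\<iota> d) e' = e"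
    using cocycle_factors_through_syzygy[OF C e] by blast
  obtain B a g where pb: "is_pullback K (I n) C (S d) (\<pi> n) e' B a g" and g_epi: "epi K B C g"
    using pullback_of_epi_exists[OF I_in_Ob C S_in_Ob cokernel_is_epi[OF pi_cokernel S_in_Ob I_in_Ob]]
      e' unfolding d by blast
  obtain f where ker: "is_kernel K (S n) B C f g"
    using pullback_of_cokernel_kernel[OF iota_mono pi_cokernel S_in_Ob I_in_Ob C S_in_Ob] e' pb
    unfolding d by blast
  have "right_almost_split K B C g"
    using pullback_of_dual_class_right_almost_split[OF d \<phi>(1) _ \<phi>_nonunit e \<eta>e e' e'e pb] \<phi>(2) by simp
  moreover have "B \<in> Ob K" using pb unfolding is_pullback_def by blast
  moreover have "f \<in> Hom K (S n) B" "g \<in> Hom K B C" using is_kernelD[OF ker] by auto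
  ultimately show ?thesis using ker g_epi unfolding d by auto
qed

end

theorem proposition1p1:
  fixes K :: "('o, 'm, 'k::field) kcat"
    and A C :: 'o
    and d :: nat
    and S I :: "nat \<Rightarrow> 'o"
    and \<iota> \<pi> :: "nat \<Rightarrow> 'm"
    and \<eta> :: "'o \<Rightarrow> ('m \<Rightarrow> 'k) \<Rightarrow> 'm set"
  assumes "klinear_abelian_enough_inj K"
    and "C \<in> Ob K" and "A \<in> Ob K"
    and "local_endring K C"
    and "d \<ge> 1"
    and "inj_resolution K A S I \<iota> \<pi>"
    and "nat_equiv_dual_ext K C I \<iota> \<pi> d \<eta>"
  shows "\<exists>B f g. B \<in> Ob K \<and> f \<in> Hom K (S (d - 1)) B \<and> g \<in> Hom K B C \<and>
           is_kernel K (S (d - 1)) B C f g \<and> epi K B C g \<and>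
           right_almost_split K B C g"
proof -
  interpret klinear_dual_ext K A S I \<iota> \<pi> C d \<eta>
    using assms unfolding klinear_abelian_enough_inj_def
    by unfold_locales auto
  show ?thesis using almost_split_sequence_exists[OF assms(4)] .
qed

end
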